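(* Let $p\in[1,\infty)$ and let $(\rho_t)_{t\in I}\subset L^1_{\rm loc}(\mathbb R^N)$ be non-negative. Assume that for every $\varepsilon>0$ there exists $\delta\in(0,1]$ such that $\frac{\rho_t(z)}{|z|^p}\ge\frac1{\varepsilon\delta^N}$ for a.e. $z\in B_\delta$ and every $t\in(0,\delta)$. If $(t_k)_{k\in\mathbb N}\subset I$ is infinitesimal and $(u_k)_{k\in\mathbb N}\subset L^p(\mathbb R^N)$ satisfies $\sup_k\big(\|u_k\|_{L^p}+\mathcal F_{t_k,p}(u_k)\big)<\infty$, then $(u_k)$ is locally precompact in $L^p(\mathbb R^N)$ and any of its $L^p_{\rm loc}(\mathbb R^N)$ limits belongs to $W^{\kappa,p}(\mathbb R^N)$, where $\kappa(z)=\liminf_{t\to0^+}\frac{\rho_t(z)}{|z|^p}$ for a.e. $z\in\mathbb R^N$.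
   Context: $I=(0,1)$; $B_\delta$ is the open ball of radius $\delta$ centred at $0$. For $u\in L^p(\mathbb R^N)$, $\mathcal F_{t,p}(u)=\int\int\frac{|u(x)-u(y)|^p}{|x-y|^p}\rho_t(x-y)\,dx\,dy$. For measurable $\kappa\colon\mathbb R^N\to[0,\infty]$, $W^{\kappa,p}(\mathbb R^N)=\{u\in L^p(\mathbb R^N):\int\int|u(x)-u(y)|^p\kappa(x-y)\,dx\,dy<\infty\}$. A subset of $L^p(\mathbb R^N)$ is locally precompact if it is precompact in $L^p(E)$ for every compact $E\subset\mathbb R^N$. *)

theory Defs
  imports "HOL-Analysis.Analysis"
begin

text \<open>Functions on R^N are modelled as functions on a Euclidean space 'a with
  N = DIM('a), equipped with Lebesgue measure.\<close>

definition in_Lp :: "real \<Rightarrow> ('a::euclidean_space \<Rightarrow> real) \<Rightarrow> bool" where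
  "in_Lp p u \<longleftrightarrow> u \<in> borel_measurable lebesgue \<and>
     (\<integral>\<^sup>+ x. ennreal (\<bar>u x\<bar> powr p) \<partial>lebesgue) < \<infinity>"

definition in_Lp_loc :: "real \<Rightarrow> ('a::euclidean_space \<Rightarrow> real) \<Rightarrow> bool" where
  "in_Lp_loc p u \<longleftrightarrow> u \<in> borel_measurable lebesgue \<and>
     (\<forall>K. compact K \<longrightarrow> (\<integral>\<^sup>+ x\<in>K. ennreal (\<bar>u x\<bar> powr p) \<partial>lebesgue) < \<infinity>)"

definition Lp_norm :: "real \<Rightarrow> ('a::euclidean_space \<Rightarrow> real) \<Rightarrow> real" where
  "Lp_norm p u = (\<integral> x. \<bar>u x\<bar> powr p \<partial>lebesgue) powr (1 / p)"

text \<open>p-th power of the L^p(E) distance.\<close>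
definition Lp_dist_on :: "real \<Rightarrow> 'a::euclidean_space set \<Rightarrow> ('a \<Rightarrow> real) \<Rightarrow> ('a \<Rightarrow> real) \<Rightarrow> ennreal" where
  "Lp_dist_on p E u v = (\<integral>\<^sup>+ x\<in>E. ennreal (\<bar>u x - v x\<bar> powr p) \<partial>lebesgue)"

definition F_tp :: "(real \<Rightarrow> 'a::euclidean_space \<Rightarrow> real) \<Rightarrow> real \<Rightarrow> real \<Rightarrow> ('a \<Rightarrow> real) \<Rightarrow> ennreal" where
  "F_tp \<rho> t p u = (\<integral>\<^sup>+ x. \<integral>\<^sup>+ y. ennreal (\<bar>u x - u y\<bar> powr p / norm (x - y) powr p * \<rho> t (x - y))
                      \<partial>lebesgue \<partial>lebesgue)"

definition in_W_kernel :: "('a::euclidean_space \<Rightarrow> ennreal) \<Rightarrow> real \<Rightarrow> ('a \<Rightarrow> real) \<Rightarrow> bool" where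
  "in_W_kernel \<kappa> p u \<longleftrightarrow> in_Lp p u \<and>
     (\<integral>\<^sup>+ x. \<integral>\<^sup>+ y. ennreal (\<bar>u x - u y\<bar> powr p) * \<kappa> (x - y) \<partial>lebesgue \<partial>lebesgue) < \<infinity>"

definition loc_precompact_seq :: "real \<Rightarrow> (nat \<Rightarrow> 'a::euclidean_space \<Rightarrow> real) \<Rightarrow> bool" where
  "loc_precompact_seq p u \<longleftrightarrow> (\<forall>E (r::nat\<Rightarrow>nat). compact E \<and> strict_mono r \<longrightarrow>
     (\<exists>(s::nat\<Rightarrow>nat) v. strict_mono s \<and> v \<in> borel_measurable lebesgue \<and>
        (\<integral>\<^sup>+ x\<in>E. ennreal (\<bar>v x\<bar> powr p) \<partial>lebesgue) < \<infinity> \<and>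
        (\<lambda>j. Lp_dist_on p E (u (r (s j))) v) \<longlonglongrightarrow> 0))"

end

theory Submission
  imports Defs "HOL-Library.Diagonal_Subsequence"
begin

(*
  Averaging u over the cubes of a grid of mesh h gives a step function P_h u. On a compact
  set E only finitely many cubes matter and the averages of a bounded sequence in L^p are
  bounded, so a diagonal argument makes P_h u_k converge for every dyadic mesh h at once.
  Jensen's inequality bounds the L^p(E) distance between u and P_h u by the integral of
  |u(x) - u(y)|^p over |x - y| < N h, and the lower bound on rho_t turns this into a small
  multiple of F_{t,p}(u) once t and h are small. Hence (u_k) is Cauchy in L^p(E) along the
  diagonal subsequence. For a limit w, an a.e. convergent subsequence and Fatou's lemma,
  applied to the double integral and to the liminf in t, bound the W^{kappa,p} energy of w.
*)

lemma measurable_diff_left_lebesgue: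
  "(\<lambda>y::'a::euclidean_space. x - y) \<in> lebesgue \<rightarrow>\<^sub>M lebesgue"
proof -
  have "(\<lambda>y::'a. x - y) = (\<lambda>y. x + (\<Sum>j\<in>Basis. ((-1) * (y \<bullet> j)) *\<^sub>R j))"
    by (auto simp: fun_eq_iff scaleR_minus_left sum_negf euclidean_representation)
  then show ?thesis
    using lebesgue_affine_measurable[of "\<lambda>_. -1" x] by simp
qed

lemma AE_lebesgue_diff_left:
  fixes x :: "'a::euclidean_space"
  assumes "AE z in lebesgue. P z"
  shows "AE y in lebesgue. P (x - y)"
proof -
  from assms obtain N where N: "{z \<in> space lebesgue. \<not> P z} \<subseteq> N" "N \<in> null_sets lebesgue"
    by (auto elim!: AE_E3 simp: eventually_ae_filter)
  have "{y. x - y \<in> N} = (\<lambda>y. x - y) -` N \<inter> space lebesgue" by auto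
  also have "\<dots> \<in> sets lebesgue"
    using measurable_sets[OF measurable_diff_left_lebesgue] N(2) by auto
  finally have sets: "{y. x - y \<in> N} \<in> sets lebesgue" .
  have "{y. x - y \<in> N} = (\<lambda>z. (-1) *\<^sub>R z + x) ` N"
    by (auto simp: image_iff)
      (metis add.commute diff_add_cancel minus_diff_eq scaleR_minus1_left uminus_add_conv_diff)
  then have "emeasure lebesgue {y. x - y \<in> N} = 0"
    using emeasure_lebesgue_affine[of "-1" x N] null_setsD1[OF N(2)] by simp
  with sets have "{y. x - y \<in> N} \<in> null_sets lebesgue" by (rule null_setsI[rotated])
  moreover have "{y \<in> space lebesgue. \<not> P (x - y)} \<subseteq> {y. x - y \<in> N}" using N(1) by auto
  ultimately show ?thesis by (auto intro: AE_I')
qed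

lemma borel_measurable_lebesgue_AE_cong:
  fixes f g :: "'a::euclidean_space \<Rightarrow> 'b::topological_space"
  assumes f: "f \<in> borel_measurable lebesgue" and ae: "AE x in lebesgue. f x = g x"
  shows "g \<in> borel_measurable lebesgue"
proof (rule measurableI)
  fix A :: "'b set" assume A: "A \<in> sets borel"
  have "AE x in lebesgue. x \<in> f -` A \<inter> space lebesgue \<longleftrightarrow> x \<in> g -` A \<inter> space lebesgue"
    using ae by eventually_elim auto
  then show "g -` A \<inter> space lebesgue \<in> sets lebesgue"
    by (rule completion.in_sets_AE[OF _ measurable_sets[OF f A]]) simp
qed simp

lemma borel_measurable_difference_quotient:
  fixes f g :: "'a::euclidean_space \<Rightarrow> real"
  assumes [measurable]: "f \<in> borel_measurable lebesgue" and g: "g \<in> borel_measurable lebesgue"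
  shows "(\<lambda>y. ennreal (\<bar>f x - f y\<bar> powr p / norm (x - y) powr p * g (x - y)))
           \<in> borel_measurable lebesgue"
proof -
  have [measurable]: "(\<lambda>y. g (x - y)) \<in> borel_measurable lebesgue"
    by (rule measurable_compose[OF measurable_diff_left_lebesgue g])
  have "(\<lambda>y. norm (x - y) powr p) \<in> borel_measurable lborel" by measurable
  then have [measurable]: "(\<lambda>y. norm (x - y) powr p) \<in> borel_measurable lebesgue"
    by (rule measurable_completion)
  show ?thesis by measurable
qed

text \<open>Tonelli's theorem is available only for the Borel product, so f and g are first replaced
  by Borel representatives, which changes the inner integral only on a null set of x.\<close>
lemma borel_measurable_difference_quotient_integral:
  fixes f g :: "'a::euclidean_space \<Rightarrow> real"
  assumes f: "f \<in> borel_measurable lebesgue" and g: "g \<in> borel_measurable lebesgue"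
  shows "(\<lambda>x. \<integral>\<^sup>+y. ennreal (\<bar>f x - f y\<bar> powr p / norm (x - y) powr p * g (x - y)) \<partial>lebesgue)
           \<in> borel_measurable lebesgue"
proof -
  obtain f' where [measurable]: "f' \<in> borel_measurable borel" and ff': "AE x in lborel. f x = f' x"
    using completion_ex_borel_measurable_real[OF f] by auto
  obtain g' where [measurable]: "g' \<in> borel_measurable borel" and gg': "AE x in lborel. g x = g' x"
    using completion_ex_borel_measurable_real[OF g] by auto
  define G where "G xy = ennreal (\<bar>f' (fst xy) - f' (snd xy)\<bar> powr p / norm (fst xy - snd xy) powr p
    * g' (fst xy - snd xy))" for xy :: "'a \<times> 'a"
  have "G \<in> borel_measurable (lborel \<Otimes>\<^sub>M lborel)"
    unfolding G_def by measurable
  then have "(\<lambda>x. \<integral>\<^sup>+y. G (x, y) \<partial>lborel) \<in> borel_measurable lborel"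
    by (rule lborel.borel_measurable_nn_integral_fst)
  then have H: "(\<lambda>x. \<integral>\<^sup>+y. G (x, y) \<partial>lborel) \<in> borel_measurable lebesgue"
    by (rule measurable_completion)
  have ffl: "AE x in lebesgue. f x = f' x" using ff' by (rule AE_completion)
  have ggl: "AE x in lebesgue. g x = g' x" using gg' by (rule AE_completion)
  have "AE x in lebesgue. (\<integral>\<^sup>+y. G (x, y) \<partial>lborel)
      = (\<integral>\<^sup>+y. ennreal (\<bar>f x - f y\<bar> powr p / norm (x - y) powr p * g (x - y)) \<partial>lebesgue)"
    using ffl
  proof eventually_elim
    case (elim x)
    have "AE y in lebesgue. g (x - y) = g' (x - y)" by (rule AE_lebesgue_diff_left[OF ggl])
    with ffl have "AE y in lebesgue.
        ennreal (\<bar>f x - f y\<bar> powr p / norm (x - y) powr p * g (x - y)) = G (x, y)"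
      by eventually_elim (simp add: G_def elim)
    then have "(\<integral>\<^sup>+y. ennreal (\<bar>f x - f y\<bar> powr p / norm (x - y) powr p * g (x - y)) \<partial>lebesgue)
        = (\<integral>\<^sup>+y. G (x, y) \<partial>lebesgue)"
      by (rule nn_integral_cong_AE)
    also have "\<dots> = (\<integral>\<^sup>+y. G (x, y) \<partial>lborel)" by (rule nn_integral_completion)
    finally show ?case by simp
  qed
  then show ?thesis by (rule borel_measurable_lebesgue_AE_cong[OF H])
qed

lemma powr_above_tangent:
  fixes p a t :: real
  assumes p: "1 \<le> p" and a: "0 < a"
  shows "a powr p + p * a powr (p - 1) * (t - a) \<le> \<bar>t\<bar> powr p"
proof (cases "t > 0")
  case True
  have d: "((\<lambda>z. z powr p) has_field_derivative p * a powr (p - 1)) (at a within {0<..})"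
    using has_real_derivative_powr[OF a, of p] by (rule has_field_derivative_at_within)
  have "(\<lambda>z. z powr p) t - (\<lambda>z. z powr p) a \<ge> p * a powr (p - 1) * (t - a)"
    by (rule convex_on_imp_above_tangent[OF powr_convex[OF p] _ _ _ d])
      (use a True in \<open>simp_all add: interior_open\<close>)
  then show ?thesis using True by simp
next
  case False
  have "a powr p = a powr (1 + (p - 1))" by simp
  also have "\<dots> = a * a powr (p - 1)" using a by (simp only: powr_add powr_one)
  finally have "a powr p + p * a powr (p - 1) * (t - a) = a powr (p - 1) * ((1 - p) * a + p * t)"
    by (simp add: algebra_simps)
  also have "\<dots> \<le> 0"
  proof (rule mult_nonneg_nonpos)
    have "(1 - p) * a \<le> 0" "p * t \<le> 0"
      using p a False by (auto intro: mult_nonpos_nonneg mult_nonneg_nonpos)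
    then show "(1 - p) * a + p * t \<le> 0" by linarith
  qed simp
  finally show ?thesis by (smt (verit) powr_ge_zero)
qed

lemma abs_powr_above_tangent:
  fixes p a t :: real
  assumes p: "1 \<le> p"
  shows "\<bar>a\<bar> powr p + p * \<bar>a\<bar> powr (p - 1) * sgn a * (t - a) \<le> \<bar>t\<bar> powr p"
proof (cases a "0::real" rule: linorder_cases)
  case less
  then show ?thesis
    using powr_above_tangent[OF p, of "-a" "-t"] by (simp add: algebra_simps)
next
  case equal
  then show ?thesis by simp
next
  case greater
  then show ?thesis using powr_above_tangent[OF p greater, of t] by simp
qed

lemma abs_add_powr_le:
  fixes p a b :: real
  assumes p: "1 \<le> p"
  shows "\<bar>a + b\<bar> powr p \<le> 2 powr (p - 1) * (\<bar>a\<bar> powr p + \<bar>b\<bar> powr p)"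
proof (cases "\<bar>a\<bar> + \<bar>b\<bar> = 0")
  case True
  then have "a = 0" "b = 0" by linarith+
  then show ?thesis by simp
next
  case False
  define m where "m = (\<bar>a\<bar> + \<bar>b\<bar>) / 2"
  have m: "0 < m"
    using False unfolding m_def by (metis abs_ge_zero add_nonneg_nonneg half_gt_zero_iff order_le_neq_trans)
  have "p * m powr (p - 1) * (\<bar>a\<bar> - m) + p * m powr (p - 1) * (\<bar>b\<bar> - m) = 0"
    unfolding m_def by (simp add: algebra_simps)
  then have "2 * m powr p \<le> \<bar>a\<bar> powr p + \<bar>b\<bar> powr p"
    using powr_above_tangent[OF p m, of "\<bar>a\<bar>"] powr_above_tangent[OF p m, of "\<bar>b\<bar>"] by simp
  moreover have "\<bar>a + b\<bar> powr p \<le> (2 * m) powr p"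
    unfolding m_def using p abs_triangle_ineq[of a b] by (intro powr_mono2) auto
  moreover have "(2 * m) powr p = 2 powr (p - 1) * (2 * m powr p)"
    using m by (simp add: powr_mult powr_diff)
  ultimately show ?thesis
    by (smt (verit) mult_left_mono powr_ge_zero)
qed

lemma abs_le_one_plus_abs_powr:
  fixes p a :: real
  assumes p: "1 \<le> p"
  shows "\<bar>a\<bar> \<le> 1 + \<bar>a\<bar> powr p"
proof (cases "\<bar>a\<bar> \<le> 1")
  case True
  then show ?thesis by (smt (verit) powr_ge_zero)
next
  case False
  then have "\<bar>a\<bar> powr 1 \<le> \<bar>a\<bar> powr p" using p by (intro powr_mono) auto
  then show ?thesis using False by simp
qed

lemma in_Lp_integrable_abs_powr:
  assumes "in_Lp p f"
  shows "integrable lebesgue (\<lambda>y. \<bar>f y\<bar> powr p)"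
proof (rule integrableI_bounded)
  have [measurable]: "f \<in> borel_measurable lebesgue" using assms unfolding in_Lp_def by blast
  show "(\<lambda>y. \<bar>f y\<bar> powr p) \<in> borel_measurable lebesgue" by measurable
  show "(\<integral>\<^sup>+y. ennreal (norm (\<bar>f y\<bar> powr p)) \<partial>lebesgue) < \<infinity>"
    using assms unfolding in_Lp_def by simp
qed

lemma nn_integral_abs_powr_eq_Lp_norm:
  assumes f: "in_Lp p f" and p: "0 < p"
  shows "(\<integral>\<^sup>+x. ennreal (\<bar>f x\<bar> powr p) \<partial>lebesgue) = ennreal (Lp_norm p f powr p)"
proof -
  define I where "I = (\<integral>x. \<bar>f x\<bar> powr p \<partial>lebesgue)"
  have "0 \<le> I" unfolding I_def by simp
  then have "Lp_norm p f powr p = I"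
    using p unfolding Lp_norm_def I_def[symmetric] by (simp add: powr_powr)
  then show ?thesis
    unfolding I_def by (simp add: nn_integral_eq_integral[OF in_Lp_integrable_abs_powr[OF f]])
qed

lemma in_Lp_integrable_on_finite_measure:
  fixes f :: "'a::euclidean_space \<Rightarrow> real"
  assumes p: "1 \<le> p" and f: "in_Lp p f"
    and Q: "Q \<in> sets lebesgue" "emeasure lebesgue Q < \<infinity>"
  shows "integrable lebesgue (\<lambda>y. indicator Q y * f y)"
proof (rule integrableI_bounded)
  have [measurable]: "f \<in> borel_measurable lebesgue" using f unfolding in_Lp_def by blast
  show "(\<lambda>y. indicator Q y * f y) \<in> borel_measurable lebesgue"
    using Q by measurable
  have "(\<integral>\<^sup>+y. ennreal (norm (indicator Q y * f y)) \<partial>lebesgue)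
      \<le> (\<integral>\<^sup>+y. indicator Q y + ennreal (\<bar>f y\<bar> powr p) \<partial>lebesgue)"
  proof (rule nn_integral_mono)
    fix y
    have "norm (indicator Q y * f y) \<le> indicator Q y + \<bar>f y\<bar> powr p"
      using abs_le_one_plus_abs_powr[OF p, of "f y"] by (auto split: split_indicator)
    then show "ennreal (norm (indicator Q y * f y)) \<le> indicator Q y + ennreal (\<bar>f y\<bar> powr p)"
      by (metis ennreal_indicator ennreal_leI ennreal_plus indicator_pos_le powr_ge_zero)
  qed
  also have "\<dots> = emeasure lebesgue Q + (\<integral>\<^sup>+y. ennreal (\<bar>f y\<bar> powr p) \<partial>lebesgue)"
    using Q by (subst nn_integral_add) auto
  also have "\<dots> < \<infinity>" using Q f unfolding in_Lp_def by simp
  finally show "(\<integral>\<^sup>+y. ennreal (norm (indicator Q y * f y)) \<partial>lebesgue) < \<infinity>" .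
qed

text \<open>Jensen's inequality, from the supporting line of t \<mapsto> |t| powr p at the average.\<close>
lemma abs_average_powr_le_set_nn_integral:
  fixes g :: "'a::euclidean_space \<Rightarrow> real"
  assumes p: "1 \<le> p" and Q: "Q \<in> sets lebesgue" "emeasure lebesgue Q < \<infinity>"
    and pos: "0 < measure lebesgue Q"
    and g: "g \<in> borel_measurable lebesgue" and int: "integrable lebesgue (\<lambda>y. indicator Q y * g y)"
  shows "ennreal (measure lebesgue Q * \<bar>(\<integral>y. indicator Q y * g y \<partial>lebesgue) / measure lebesgue Q\<bar> powr p)
           \<le> (\<integral>\<^sup>+y\<in>Q. ennreal (\<bar>g y\<bar> powr p) \<partial>lebesgue)"
proof (cases "(\<integral>\<^sup>+y\<in>Q. ennreal (\<bar>g y\<bar> powr p) \<partial>lebesgue) = \<infinity>")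
  case True
  then show ?thesis by simp
next
  case False
  define \<mu> where "\<mu> = measure lebesgue Q"
  define a where "a = (\<integral>y. indicator Q y * g y \<partial>lebesgue) / \<mu>"
  define c where "c = p * \<bar>a\<bar> powr (p - 1) * sgn a"
  have nn: "(\<integral>\<^sup>+y\<in>Q. ennreal (\<bar>g y\<bar> powr p) \<partial>lebesgue)
      = (\<integral>\<^sup>+y. ennreal (indicator Q y * \<bar>g y\<bar> powr p) \<partial>lebesgue)"
    by (intro nn_integral_cong) (auto split: split_indicator)
  have "(\<lambda>y. indicator Q y * \<bar>g y\<bar> powr p) \<in> borel_measurable lebesgue"
    using Q g by measurable
  then have int_powr: "integrable lebesgue (\<lambda>y. indicator Q y * \<bar>g y\<bar> powr p)"
    by (rule integrableI_bounded) (use False nn in \<open>simp add: less_top\<close>)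
  have int_Q: "integrable lebesgue (indicator Q :: 'a \<Rightarrow> real)"
    using Q by simp
  have tangent: "(\<lambda>y. indicator Q y * (\<bar>a\<bar> powr p + c * (g y - a)))
      = (\<lambda>y. (\<bar>a\<bar> powr p - c * a) * indicator Q y + c * (indicator Q y * g y))"
    by (auto simp: fun_eq_iff algebra_simps split: split_indicator)
  have int_tangent: "integrable lebesgue (\<lambda>y. indicator Q y * (\<bar>a\<bar> powr p + c * (g y - a)))"
    unfolding tangent using int_Q int by simp
  have "(\<integral>y. indicator Q y * (\<bar>a\<bar> powr p + c * (g y - a)) \<partial>lebesgue)
      = (\<bar>a\<bar> powr p - c * a) * \<mu> + c * (\<integral>y. indicator Q y * g y \<partial>lebesgue)"
    unfolding tangent using int_Q int Q by (simp add: \<mu>_def)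
  also have "(\<integral>y. indicator Q y * g y \<partial>lebesgue) = \<mu> * a"
    using pos by (simp add: a_def \<mu>_def)
  finally have "\<mu> * \<bar>a\<bar> powr p = (\<integral>y. indicator Q y * (\<bar>a\<bar> powr p + c * (g y - a)) \<partial>lebesgue)"
    by (simp add: algebra_simps)
  also have "\<dots> \<le> (\<integral>y. indicator Q y * \<bar>g y\<bar> powr p \<partial>lebesgue)"
  proof (rule integral_mono[OF int_tangent int_powr])
    fix y
    show "indicator Q y * (\<bar>a\<bar> powr p + c * (g y - a)) \<le> indicator Q y * \<bar>g y\<bar> powr p"
      using abs_powr_above_tangent[OF p, of a "g y"] by (auto simp: c_def split: split_indicator)
  qed
  finally have le: "\<mu> * \<bar>a\<bar> powr p \<le> (\<integral>y. indicator Q y * \<bar>g y\<bar> powr p \<partial>lebesgue)" .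
  have "(\<integral>\<^sup>+y\<in>Q. ennreal (\<bar>g y\<bar> powr p) \<partial>lebesgue)
      = ennreal (\<integral>y. indicator Q y * \<bar>g y\<bar> powr p \<partial>lebesgue)"
    unfolding nn by (rule nn_integral_eq_integral[OF int_powr]) simp
  with le show ?thesis unfolding \<mu>_def a_def by (simp only: ennreal_leI)
qed

definition grid_index :: "real \<Rightarrow> 'a::euclidean_space \<Rightarrow> ('a \<Rightarrow> int)" where
  "grid_index h x = restrict (\<lambda>b. \<lfloor>(x \<bullet> b) / h\<rfloor>) Basis"

definition grid_cube :: "real \<Rightarrow> ('a::euclidean_space \<Rightarrow> int) \<Rightarrow> 'a set" where
  "grid_cube h k = {x. grid_index h x = k}"

lemma grid_cube_eq_box:
  fixes k :: "'a::euclidean_space \<Rightarrow> int" and h :: real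
  assumes h: "0 < h" and k: "k \<in> extensional Basis"
  shows "grid_cube h k = {x. \<forall>b\<in>Basis. of_int (k b) * h \<le> x \<bullet> b \<and> x \<bullet> b < (of_int (k b) + 1) * h}"
proof -
  have "grid_index h x = k \<longleftrightarrow> (\<forall>b\<in>Basis. \<lfloor>(x \<bullet> b) / h\<rfloor> = k b)" for x
    using k unfolding grid_index_def by (auto simp: fun_eq_iff extensional_def)
  moreover have "\<lfloor>(x \<bullet> b) / h\<rfloor> = k b \<longleftrightarrow> of_int (k b) * h \<le> x \<bullet> b \<and> x \<bullet> b < (of_int (k b) + 1) * h"
    for x b
    using h by (simp add: floor_eq_iff pos_le_divide_eq pos_divide_less_eq)
  ultimately show ?thesis by (auto simp: grid_cube_def)
qed

lemma grid_cube_sets: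
  fixes h :: real
  assumes "0 < h"
  shows "grid_cube h k \<in> sets lebesgue"
proof (cases "k \<in> extensional Basis")
  case True
  have "{x::'a. \<forall>b\<in>Basis. of_int (k b) * h \<le> x \<bullet> b \<and> x \<bullet> b < (of_int (k b) + 1) * h} \<in> sets borel"
    by measurable
  then show ?thesis using grid_cube_eq_box[OF assms True] by simp
next
  case False
  then have "grid_cube h k = {}" unfolding grid_cube_def grid_index_def by auto
  then show ?thesis by simp
qed

lemma norm_diff_less_grid_cube:
  fixes x y :: "'a::euclidean_space"
  assumes h: "0 < h" and y: "y \<in> grid_cube h (grid_index h x)"
  shows "norm (x - y) < real DIM('a) * h"
proof -
  have "\<bar>(x - y) \<bullet> b\<bar> < h" if b: "b \<in> Basis" for b
  proof -
    have "\<lfloor>(x \<bullet> b) / h\<rfloor> = \<lfloor>(y \<bullet> b) / h\<rfloor>"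
      using y b unfolding grid_cube_def grid_index_def
      by (metis (mono_tags, lifting) mem_Collect_eq restrict_apply')
    then have "\<bar>(x \<bullet> b) / h - (y \<bullet> b) / h\<bar> < 1"
      by (smt (verit, best) floor_eq_iff)
    moreover have "\<bar>(x - y) \<bullet> b\<bar> = h * \<bar>(x \<bullet> b) / h - (y \<bullet> b) / h\<bar>"
    proof -
      have "(x - y) \<bullet> b = h * ((x \<bullet> b) / h - (y \<bullet> b) / h)"
        using h by (simp add: inner_diff_left right_diff_distrib)
      then show ?thesis using h by (simp add: abs_mult)
    qed
    ultimately show ?thesis using h by (metis mult.right_neutral mult_strict_left_mono)
  qed
  then have "(\<Sum>b\<in>Basis. \<bar>(x - y) \<bullet> b\<bar>) < (\<Sum>b\<in>(Basis::'a set). h)"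
    by (intro sum_strict_mono) auto
  then show ?thesis using norm_le_l1[of "x - y"] by simp
qed

lemma grid_cube_lmeasurable:
  assumes h: "0 < h"
  shows "grid_cube h (grid_index h x) \<in> lmeasurable"
proof -
  have "grid_cube h (grid_index h x) \<subseteq> cball x (real DIM('a) * h)"
  proof
    fix y assume "y \<in> grid_cube h (grid_index h x)"
    then show "y \<in> cball x (real DIM('a) * h)"
      using norm_diff_less_grid_cube[OF h] by (fastforce simp: dist_norm)
  qed
  then show ?thesis
    by (intro bounded_set_imp_lmeasurable grid_cube_sets[OF h]) (rule bounded_subset[OF bounded_cball])
qed

lemma ball_subset_grid_cube:
  fixes x :: "'a::euclidean_space"
  assumes h: "0 < h"
  shows "ball (\<Sum>b\<in>Basis. ((of_int (grid_index h x b) + 1/2) * h) *\<^sub>R b) (h/2)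
    \<subseteq> grid_cube h (grid_index h x)" (is "ball ?c _ \<subseteq> _")
proof
  fix y assume y: "y \<in> ball ?c (h/2)"
  have "\<lfloor>(y \<bullet> b) / h\<rfloor> = grid_index h x b" if b: "b \<in> Basis" for b
  proof -
    have "?c \<bullet> b = of_int (grid_index h x b) * h + h/2"
      using b by (simp add: inner_sum_left inner_Basis if_distrib sum.delta algebra_simps cong: if_cong)
    moreover have "\<bar>y \<bullet> b - ?c \<bullet> b\<bar> < h/2"
      using Basis_le_norm[OF b, of "y - ?c"] y by (simp add: dist_norm norm_minus_commute inner_diff_left)
    ultimately have "of_int (grid_index h x b) * h \<le> y \<bullet> b \<and> y \<bullet> b < of_int (grid_index h x b) * h + h"
      by (simp only: abs_less_iff) linarith
    then show ?thesis
      using h by (simp add: floor_eq_iff pos_le_divide_eq pos_divide_less_eq algebra_simps)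
  qed
  then show "y \<in> grid_cube h (grid_index h x)"
    unfolding grid_cube_def grid_index_def by (auto simp: fun_eq_iff)
qed

lemma measure_grid_cube_ge:
  fixes x :: "'a::euclidean_space"
  assumes h: "0 < h"
  shows "unit_ball_vol DIM('a) * (h/2) ^ DIM('a) \<le> measure lebesgue (grid_cube h (grid_index h x))"
proof -
  define c :: 'a where "c = (\<Sum>b\<in>Basis. ((of_int (grid_index h x b) + 1/2) * h) *\<^sub>R b)"
  have "measure lebesgue (ball c (h/2)) \<le> measure lebesgue (grid_cube h (grid_index h x))"
    using ball_subset_grid_cube[OF h, of x] grid_cube_lmeasurable[OF h, of x] unfolding c_def
    by (intro measure_mono_fmeasurable) auto
  then show ?thesis using content_ball[of "h/2" c] h by simp
qed

lemma measure_grid_cube_pos: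
  assumes "0 < h"
  shows "0 < measure lebesgue (grid_cube h (grid_index h x))"
proof -
  have "0 < unit_ball_vol DIM('a) * (h/2) ^ DIM('a)" using assms by simp
  then show ?thesis using measure_grid_cube_ge[OF assms, of x] by linarith
qed

lemma finite_grid_index_image:
  fixes E :: "'a::euclidean_space set"
  assumes h: "0 < h" and E: "bounded E"
  shows "finite (grid_index h ` E)"
proof -
  obtain R where R: "\<And>x. x \<in> E \<Longrightarrow> norm x \<le> R"
    using E by (auto simp: bounded_iff)
  have "grid_index h ` E \<subseteq> (\<Pi>\<^sub>E b\<in>Basis. {\<lfloor>-R/h\<rfloor>..\<lfloor>R/h\<rfloor>})"
  proof
    fix k assume "k \<in> grid_index h ` E"
    then obtain x where x: "x \<in> E" and k: "k = grid_index h x" by auto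
    have "\<lfloor>(x \<bullet> b) / h\<rfloor> \<in> {\<lfloor>-R/h\<rfloor>..\<lfloor>R/h\<rfloor>}" if b: "b \<in> Basis" for b
    proof -
      have "-R \<le> x \<bullet> b" "x \<bullet> b \<le> R"
        using Basis_le_norm[OF b, of x] R[OF x] by linarith+
      then have "-R/h \<le> (x \<bullet> b)/h" "(x \<bullet> b)/h \<le> R/h"
        using divide_right_mono[of "-R" "x \<bullet> b" h] divide_right_mono[of "x \<bullet> b" R h] h by auto
      then show ?thesis by (auto intro: floor_mono)
    qed
    then show "k \<in> (\<Pi>\<^sub>E b\<in>Basis. {\<lfloor>-R/h\<rfloor>..\<lfloor>R/h\<rfloor>})"
      unfolding k grid_index_def by auto
  qed
  moreover have "finite (\<Pi>\<^sub>E b\<in>(Basis::'a set). {\<lfloor>-R/h\<rfloor>..\<lfloor>R/h\<rfloor>})"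
    by (intro finite_PiE) auto
  ultimately show ?thesis by (rule finite_subset)
qed

definition cube_avg :: "real \<Rightarrow> ('a::euclidean_space \<Rightarrow> real) \<Rightarrow> ('a \<Rightarrow> int) \<Rightarrow> real" where
  "cube_avg h f k = (\<integral>y. indicator (grid_cube h k) y * f y \<partial>lebesgue) / measure lebesgue (grid_cube h k)"

definition grid_step :: "real \<Rightarrow> 'a::euclidean_space set \<Rightarrow> (('a \<Rightarrow> int) \<Rightarrow> real) \<Rightarrow> 'a \<Rightarrow> real" where
  "grid_step h E a x = (\<Sum>k\<in>grid_index h ` E. indicator (grid_cube h k) x * a k)"

lemma grid_step_eq:
  assumes "finite (grid_index h ` E)" and "x \<in> E"
  shows "grid_step h E a x = a (grid_index h x)"
proof -
  have "grid_step h E a x = (\<Sum>k\<in>grid_index h ` E. if grid_index h x = k then a k else 0)"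
    unfolding grid_step_def by (intro sum.cong) (auto simp: indicator_def grid_cube_def)
  also have "\<dots> = a (grid_index h x)"
    using assms by (simp add: sum.delta)
  finally show ?thesis .
qed

lemma borel_measurable_grid_step:
  assumes "0 < h"
  shows "grid_step h E a \<in> borel_measurable lebesgue"
  unfolding grid_step_def
  by (intro borel_measurable_sum borel_measurable_times borel_measurable_indicator
      grid_cube_sets[OF assms] borel_measurable_const)

lemma Lp_dist_on_grid_step_le:
  fixes E :: "'a::euclidean_space set"
  assumes h: "0 < h" and fin: "finite (grid_index h ` E)"
  shows "Lp_dist_on p E (grid_step h E a) (grid_step h E b)
    \<le> ennreal (\<Sum>k\<in>grid_index h ` E. \<bar>a k - b k\<bar> powr p * measure lebesgue (grid_cube h k))"
proof -
  define K where "K = grid_index h ` E"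
  define \<phi> where "\<phi> k x = indicator (grid_cube h k) x * \<bar>a k - b k\<bar> powr p" for k x
  have lmeas: "grid_cube h k \<in> lmeasurable" if "k \<in> K" for k
    using that grid_cube_lmeasurable[OF h] unfolding K_def by auto
  have int: "integrable lebesgue (\<phi> k)" if "k \<in> K" for k
  proof -
    have "integrable lebesgue (indicator (grid_cube h k) :: 'a \<Rightarrow> real)"
      using lmeas[OF that] by (auto simp: fmeasurable_def)
    then show ?thesis unfolding \<phi>_def by simp
  qed
  have "Lp_dist_on p E (grid_step h E a) (grid_step h E b) \<le> (\<integral>\<^sup>+x. ennreal (\<Sum>k\<in>K. \<phi> k x) \<partial>lebesgue)"
    unfolding Lp_dist_on_def
  proof (rule nn_integral_mono)
    fix x
    show "ennreal (\<bar>grid_step h E a x - grid_step h E b x\<bar> powr p) * indicator E x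
        \<le> ennreal (\<Sum>k\<in>K. \<phi> k x)"
    proof (cases "x \<in> E")
      case True
      have "(\<Sum>k\<in>K. \<phi> k x) = (\<Sum>k\<in>K. if grid_index h x = k then \<bar>a k - b k\<bar> powr p else 0)"
        unfolding \<phi>_def by (intro sum.cong) (auto simp: indicator_def grid_cube_def)
      also have "\<dots> = \<bar>a (grid_index h x) - b (grid_index h x)\<bar> powr p"
        using fin True by (simp add: sum.delta K_def)
      finally show ?thesis using True grid_step_eq[OF fin True] by simp
    qed simp
  qed
  also have "\<dots> = ennreal (\<integral>x. (\<Sum>k\<in>K. \<phi> k x) \<partial>lebesgue)"
    using Bochner_Integration.integrable_sum[of K, OF int]
    by (intro nn_integral_eq_integral) (auto simp: \<phi>_def intro!: sum_nonneg)
  also have "(\<integral>x. (\<Sum>k\<in>K. \<phi> k x) \<partial>lebesgue) = (\<Sum>k\<in>K. \<integral>x. \<phi> k x \<partial>lebesgue)"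
    using int by (rule Bochner_Integration.integral_sum)
  also have "\<dots> = (\<Sum>k\<in>K. \<bar>a k - b k\<bar> powr p * measure lebesgue (grid_cube h k))"
    using lmeas by (intro sum.cong refl) (simp add: \<phi>_def fmeasurableD)
  finally show ?thesis unfolding K_def .
qed

lemma abs_cube_avg_le:
  fixes f :: "'a::euclidean_space \<Rightarrow> real"
  assumes p: "1 \<le> p" and f: "in_Lp p f" and h: "0 < h"
    and M: "(\<integral>\<^sup>+x. ennreal (\<bar>f x\<bar> powr p) \<partial>lebesgue) \<le> ennreal M" "0 \<le> M"
  shows "\<bar>cube_avg h f (grid_index h x)\<bar>
    \<le> (measure lebesgue (grid_cube h (grid_index h x)) + M) / measure lebesgue (grid_cube h (grid_index h x))"
proof -
  define Q where "Q = grid_cube h (grid_index h x)"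
  have Q: "Q \<in> sets lebesgue" "emeasure lebesgue Q < \<infinity>" "0 < measure lebesgue Q"
    using grid_cube_lmeasurable[OF h] measure_grid_cube_pos[OF h]
    unfolding Q_def by (auto simp: fmeasurable_def)
  have int_Qf: "integrable lebesgue (\<lambda>y. indicator Q y * f y)"
    by (rule in_Lp_integrable_on_finite_measure[OF p f Q(1,2)])
  have int_powr: "integrable lebesgue (\<lambda>y. \<bar>f y\<bar> powr p)"
    by (rule in_Lp_integrable_abs_powr[OF f])
  have int_Q: "integrable lebesgue (indicator Q :: 'a \<Rightarrow> real)" using Q by simp
  have "\<bar>\<integral>y. indicator Q y * f y \<partial>lebesgue\<bar> \<le> (\<integral>y. norm (indicator Q y * f y) \<partial>lebesgue)"
    using integral_norm_bound[of lebesgue "\<lambda>y. indicator Q y * f y"] by simp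
  also have "\<dots> \<le> (\<integral>y. indicator Q y + \<bar>f y\<bar> powr p \<partial>lebesgue)"
    using int_Qf int_Q int_powr abs_le_one_plus_abs_powr[OF p]
    by (intro integral_mono) (auto split: split_indicator)
  also have "\<dots> = measure lebesgue Q + (\<integral>y. \<bar>f y\<bar> powr p \<partial>lebesgue)"
    using int_Q int_powr Q by simp
  also have "(\<integral>y. \<bar>f y\<bar> powr p \<partial>lebesgue) \<le> M"
  proof -
    have "ennreal (\<integral>y. \<bar>f y\<bar> powr p \<partial>lebesgue) = (\<integral>\<^sup>+x. ennreal (\<bar>f x\<bar> powr p) \<partial>lebesgue)"
      by (rule nn_integral_eq_integral[OF int_powr, symmetric]) simp
    then show ?thesis using M by (metis ennreal_le_iff)
  qed
  finally show ?thesis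
    using Q(3) unfolding cube_avg_def Q_def[symmetric] by (simp add: abs_divide divide_right_mono)
qed

lemma abs_diff_cube_avg_powr_le:
  fixes f :: "'a::euclidean_space \<Rightarrow> real"
  assumes p: "1 \<le> p" and f: "in_Lp p f" and h: "0 < h"
  shows "ennreal (\<bar>f x - cube_avg h f (grid_index h x)\<bar> powr p)
     \<le> ennreal (1 / measure lebesgue (grid_cube h (grid_index h x))) *
        (\<integral>\<^sup>+y\<in>grid_cube h (grid_index h x). ennreal (\<bar>f x - f y\<bar> powr p) \<partial>lebesgue)"
proof -
  define Q where "Q = grid_cube h (grid_index h x)"
  define \<mu> where "\<mu> = measure lebesgue Q"
  have Q: "Q \<in> sets lebesgue" "emeasure lebesgue Q < \<infinity>" "0 < \<mu>"
    using grid_cube_lmeasurable[OF h] measure_grid_cube_pos[OF h]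
    unfolding Q_def \<mu>_def by (auto simp: fmeasurable_def)
  have fm[measurable]: "f \<in> borel_measurable lebesgue" using f unfolding in_Lp_def by blast
  have int_Qf: "integrable lebesgue (\<lambda>y. indicator Q y * f y)"
    by (rule in_Lp_integrable_on_finite_measure[OF p f Q(1,2)])
  have int_Q: "integrable lebesgue (indicator Q :: 'a \<Rightarrow> real)" using Q by simp
  have diff: "(\<lambda>y. indicator Q y * (f x - f y)) = (\<lambda>y. f x * indicator Q y - indicator Q y * f y)"
    by (auto simp: fun_eq_iff algebra_simps)
  have "(\<integral>y. indicator Q y * (f x - f y) \<partial>lebesgue) = f x * \<mu> - (\<integral>y. indicator Q y * f y \<partial>lebesgue)"
    unfolding diff using int_Q int_Qf Q by (simp add: \<mu>_def)
  then have avg: "(\<integral>y. indicator Q y * (f x - f y) \<partial>lebesgue) / \<mu> = f x - cube_avg h f (grid_index h x)"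
    using Q(3) unfolding cube_avg_def Q_def[symmetric] \<mu>_def[symmetric] by (simp add: diff_divide_distrib)
  have "(\<lambda>y. f x - f y) \<in> borel_measurable lebesgue" by measurable
  moreover have "integrable lebesgue (\<lambda>y. indicator Q y * (f x - f y))"
    unfolding diff using int_Q int_Qf by simp
  ultimately have "ennreal (\<mu> * \<bar>(\<integral>y. indicator Q y * (f x - f y) \<partial>lebesgue) / \<mu>\<bar> powr p)
      \<le> (\<integral>\<^sup>+y\<in>Q. ennreal (\<bar>f x - f y\<bar> powr p) \<partial>lebesgue)"
    unfolding \<mu>_def by (rule abs_average_powr_le_set_nn_integral[OF p Q(1,2) Q(3)[unfolded \<mu>_def]])
  then have "ennreal (\<mu> * \<bar>f x - cube_avg h f (grid_index h x)\<bar> powr p)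
      \<le> (\<integral>\<^sup>+y\<in>Q. ennreal (\<bar>f x - f y\<bar> powr p) \<partial>lebesgue)"
    unfolding avg .
  then have "ennreal (1 / \<mu>) * ennreal (\<mu> * \<bar>f x - cube_avg h f (grid_index h x)\<bar> powr p)
      \<le> ennreal (1 / \<mu>) * (\<integral>\<^sup>+y\<in>Q. ennreal (\<bar>f x - f y\<bar> powr p) \<partial>lebesgue)"
    by (rule mult_left_mono) simp
  then show ?thesis
    using Q(3) unfolding Q_def[symmetric] \<mu>_def[symmetric] by (simp add: ennreal_mult[symmetric])
qed

text \<open>Every y in the cube of x satisfies |x - y| < N h, where the kernel g dominates
  1 / (c |x - y| powr p).\<close>
lemma abs_diff_cube_avg_powr_le_difference_quotient:
  fixes f g :: "'a::euclidean_space \<Rightarrow> real"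
  assumes p: "1 \<le> p" and f: "in_Lp p f" and g: "g \<in> borel_measurable lebesgue"
    and h: "0 < h" and c: "0 < c"
    and lower: "AE z in lebesgue. z \<in> ball 0 (real DIM('a) * h) \<longrightarrow> 1 / c \<le> g z / norm z powr p"
  shows "ennreal (\<bar>f x - cube_avg h f (grid_index h x)\<bar> powr p)
    \<le> ennreal (c / (unit_ball_vol DIM('a) * (h/2) ^ DIM('a))) *
       (\<integral>\<^sup>+y. ennreal (\<bar>f x - f y\<bar> powr p / norm (x - y) powr p * g (x - y)) \<partial>lebesgue)"
proof -
  define Q where "Q = grid_cube h (grid_index h x)"
  define \<mu> where "\<mu> = measure lebesgue Q"
  define \<omega> where "\<omega> = unit_ball_vol DIM('a) * (h/2) ^ DIM('a)"
  define G where "G y = ennreal (\<bar>f x - f y\<bar> powr p / norm (x - y) powr p * g (x - y))" for y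
  have \<omega>: "0 < \<omega>" "\<omega> \<le> \<mu>"
    using h measure_grid_cube_ge[OF h, of x] unfolding \<omega>_def \<mu>_def Q_def by auto
  have fm: "f \<in> borel_measurable lebesgue" using f unfolding in_Lp_def by blast
  have "(\<integral>\<^sup>+y\<in>Q. ennreal (\<bar>f x - f y\<bar> powr p) \<partial>lebesgue) \<le> (\<integral>\<^sup>+y. ennreal c * G y \<partial>lebesgue)"
  proof (rule nn_integral_mono_AE)
    show "AE y in lebesgue. ennreal (\<bar>f x - f y\<bar> powr p) * indicator Q y \<le> ennreal c * G y"
      using AE_lebesgue_diff_left[OF lower, of x]
    proof eventually_elim
      case (elim y)
      show ?case
      proof (cases "y \<in> Q")
        case True
        then have "x - y \<in> ball 0 (real DIM('a) * h)"
          using norm_diff_less_grid_cube[OF h] unfolding Q_def by simp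
        define q where "q = g (x - y) / norm (x - y) powr p"
        have "1 / c \<le> q" using elim \<open>x - y \<in> ball 0 (real DIM('a) * h)\<close> unfolding q_def by simp
        then have "1 \<le> c * q" using c by (simp add: divide_le_eq mult.commute)
        then have "\<bar>f x - f y\<bar> powr p * 1 \<le> \<bar>f x - f y\<bar> powr p * (c * q)"
          by (intro mult_left_mono) auto
        also have "\<dots> = c * (\<bar>f x - f y\<bar> powr p / norm (x - y) powr p * g (x - y))"
          unfolding q_def by simp
        finally show ?thesis
          using True c unfolding G_def by (simp add: ennreal_mult'[symmetric] ennreal_leI)
      qed simp
    qed
  qed
  also have "\<dots> = ennreal c * (\<integral>\<^sup>+y. G y \<partial>lebesgue)"
    unfolding G_def by (rule nn_integral_cmult[OF borel_measurable_difference_quotient[OF fm g]])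
  finally have "ennreal (\<bar>f x - cube_avg h f (grid_index h x)\<bar> powr p)
      \<le> ennreal (1 / \<mu>) * (ennreal c * (\<integral>\<^sup>+y. G y \<partial>lebesgue))"
    using abs_diff_cube_avg_powr_le[OF p f h, of x] unfolding Q_def[symmetric] \<mu>_def[symmetric]
    by (meson mult_left_mono order_trans zero_le)
  also have "\<dots> \<le> ennreal (c / \<omega>) * (\<integral>\<^sup>+y. G y \<partial>lebesgue)"
  proof -
    have "c / \<mu> \<le> c / \<omega>" using c \<omega> by (intro divide_left_mono) auto
    then have "ennreal (1 / \<mu>) * ennreal c \<le> ennreal (c / \<omega>)"
      using c \<omega> by (simp add: ennreal_mult[symmetric] ennreal_leI)
    then show ?thesis by (simp add: mult.assoc[symmetric] mult_right_mono)
  qed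
  finally show ?thesis unfolding \<omega>_def G_def .
qed

lemma Lp_dist_on_grid_step_cube_avg_le:
  fixes f g :: "'a::euclidean_space \<Rightarrow> real"
  assumes p: "1 \<le> p" and f: "in_Lp p f" and g: "g \<in> borel_measurable lebesgue"
    and h: "0 < h" and c: "0 < c" and E: "bounded E"
    and lower: "AE z in lebesgue. z \<in> ball 0 (real DIM('a) * h) \<longrightarrow> 1 / c \<le> g z / norm z powr p"
  shows "Lp_dist_on p E f (grid_step h E (cube_avg h f))
    \<le> ennreal (c / (unit_ball_vol DIM('a) * (h/2) ^ DIM('a))) *
       (\<integral>\<^sup>+x. \<integral>\<^sup>+y. ennreal (\<bar>f x - f y\<bar> powr p / norm (x - y) powr p * g (x - y)) \<partial>lebesgue \<partial>lebesgue)"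
proof -
  define K where "K = ennreal (c / (unit_ball_vol DIM('a) * (h/2) ^ DIM('a)))"
  define G where "G x = (\<integral>\<^sup>+y. ennreal (\<bar>f x - f y\<bar> powr p / norm (x - y) powr p * g (x - y)) \<partial>lebesgue)"
    for x
  have fm: "f \<in> borel_measurable lebesgue" using f unfolding in_Lp_def by blast
  have "Lp_dist_on p E f (grid_step h E (cube_avg h f)) \<le> (\<integral>\<^sup>+x. K * G x \<partial>lebesgue)"
    unfolding Lp_dist_on_def
  proof (rule nn_integral_mono)
    fix x
    show "ennreal (\<bar>f x - grid_step h E (cube_avg h f) x\<bar> powr p) * indicator E x \<le> K * G x"
    proof (cases "x \<in> E")
      case True
      then show ?thesis
        using abs_diff_cube_avg_powr_le_difference_quotient[OF p f g h c lower, of x]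
          grid_step_eq[OF finite_grid_index_image[OF h E] True]
        unfolding K_def G_def by simp
    qed simp
  qed
  also have "\<dots> = K * (\<integral>\<^sup>+x. G x \<partial>lebesgue)"
    unfolding G_def by (rule nn_integral_cmult[OF borel_measurable_difference_quotient_integral[OF fm g]])
  finally show ?thesis unfolding K_def G_def .
qed

lemma strict_mono_choice:
  fixes P :: "nat \<Rightarrow> nat \<Rightarrow> bool"
  assumes "\<And>j. eventually (P j) sequentially"
  shows "\<exists>s. strict_mono s \<and> (\<forall>j. P j (s j))"
proof -
  have ex: "\<exists>n\<ge>N. P j n" for j N
  proof -
    obtain M where "\<forall>n\<ge>M. P j n" using assms[of j] by (auto simp: eventually_sequentially)
    then show ?thesis by (intro exI[of _ "max N M"]) auto
  qed
  have "\<exists>s. \<forall>n. P n (s n) \<and> s n < s (Suc n)"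
  proof (rule dependent_nat_choice)
    show "\<exists>x. P 0 x" using ex by blast
    fix x n
    obtain y where "y \<ge> Suc x" "P (Suc n) y" using ex by blast
    then show "\<exists>y. P (Suc n) y \<and> x < y" by auto
  qed
  then show ?thesis by (auto simp: strict_mono_Suc_iff)
qed

lemma Lp_dist_on_commute: "Lp_dist_on p E f g = Lp_dist_on p E g f"
  unfolding Lp_dist_on_def by (simp add: abs_minus_commute)

lemma Lp_dist_on_triangle:
  fixes f g h :: "'a::euclidean_space \<Rightarrow> real"
  assumes p: "1 \<le> p" and E: "E \<in> sets lebesgue"
    and [measurable]: "f \<in> borel_measurable lebesgue" "g \<in> borel_measurable lebesgue"
      "h \<in> borel_measurable lebesgue"
  shows "Lp_dist_on p E f h
    \<le> ennreal (2 powr (p - 1)) * Lp_dist_on p E f g + ennreal (2 powr (p - 1)) * Lp_dist_on p E g h"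
proof -
  define L where "L = ennreal (2 powr (p - 1))"
  have "Lp_dist_on p E f h \<le> (\<integral>\<^sup>+x. L * (ennreal (\<bar>f x - g x\<bar> powr p) * indicator E x)
            + L * (ennreal (\<bar>g x - h x\<bar> powr p) * indicator E x) \<partial>lebesgue)"
    unfolding Lp_dist_on_def
  proof (rule nn_integral_mono)
    fix x
    have "ennreal (\<bar>(f x - g x) + (g x - h x)\<bar> powr p)
        \<le> ennreal (2 powr (p - 1) * (\<bar>f x - g x\<bar> powr p + \<bar>g x - h x\<bar> powr p))"
      by (rule ennreal_leI[OF abs_add_powr_le[OF p]])
    also have "\<dots> = L * ennreal (\<bar>f x - g x\<bar> powr p) + L * ennreal (\<bar>g x - h x\<bar> powr p)"
      unfolding L_def by (simp add: ennreal_mult ennreal_plus distrib_left)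
    finally show "ennreal (\<bar>f x - h x\<bar> powr p) * indicator E x
        \<le> L * (ennreal (\<bar>f x - g x\<bar> powr p) * indicator E x)
          + L * (ennreal (\<bar>g x - h x\<bar> powr p) * indicator E x)"
      by (auto split: split_indicator)
  qed
  also have "\<dots> = L * Lp_dist_on p E f g + L * Lp_dist_on p E g h"
  proof -
    have m1[measurable]: "(\<lambda>x. ennreal (\<bar>f x - g x\<bar> powr p) * indicator E x) \<in> borel_measurable lebesgue"
      and m2[measurable]: "(\<lambda>x. ennreal (\<bar>g x - h x\<bar> powr p) * indicator E x) \<in> borel_measurable lebesgue"
      using E by measurable
    show ?thesis
      unfolding Lp_dist_on_def
      by (simp add: nn_integral_add nn_integral_cmult[OF m1] nn_integral_cmult[OF m2])
  qed
  finally show ?thesis unfolding L_def .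
qed

lemma Lp_dist_on_le_liminf:
  fixes f :: "nat \<Rightarrow> 'a::euclidean_space \<Rightarrow> real"
  assumes p: "0 < p" and E: "E \<in> sets lebesgue" and [measurable]: "g \<in> borel_measurable lebesgue"
    "\<And>i. f i \<in> borel_measurable lebesgue"
    and lim: "AE x in lebesgue. x \<in> E \<longrightarrow> (\<lambda>i. f i x) \<longlonglongrightarrow> v x"
  shows "Lp_dist_on p E g v \<le> liminf (\<lambda>i. Lp_dist_on p E g (f i))"
proof -
  have "Lp_dist_on p E g v
      = (\<integral>\<^sup>+x. liminf (\<lambda>i. ennreal (\<bar>g x - f i x\<bar> powr p) * indicator E x) \<partial>lebesgue)"
    unfolding Lp_dist_on_def
  proof (rule nn_integral_cong_AE)
    show "AE x in lebesgue. ennreal (\<bar>g x - v x\<bar> powr p) * indicator E x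
        = liminf (\<lambda>i. ennreal (\<bar>g x - f i x\<bar> powr p) * indicator E x)"
      using lim
    proof eventually_elim
      case (elim x)
      show ?case
      proof (cases "x \<in> E")
        case True
        then have "(\<lambda>i. \<bar>g x - f i x\<bar> powr p) \<longlonglongrightarrow> \<bar>g x - v x\<bar> powr p"
          using elim p by (intro tendsto_intros) auto
        then have "(\<lambda>i. ennreal (\<bar>g x - f i x\<bar> powr p)) \<longlonglongrightarrow> ennreal (\<bar>g x - v x\<bar> powr p)"
          by (rule tendsto_ennrealI)
        then have "liminf (\<lambda>i. ennreal (\<bar>g x - f i x\<bar> powr p)) = ennreal (\<bar>g x - v x\<bar> powr p)"
          by (intro lim_imp_Liminf) auto
        then show ?thesis using True by simp
      qed (simp add: Liminf_const)
    qed
  qed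
  also have "\<dots> \<le> liminf (\<lambda>i. Lp_dist_on p E g (f i))"
    unfolding Lp_dist_on_def by (intro nn_integral_liminf) (use E in measurable)
  finally show ?thesis .
qed

lemma Markov_inequality_powr:
  fixes g :: "'a::euclidean_space \<Rightarrow> real"
  assumes p: "0 < p" and g: "g \<in> borel_measurable lebesgue" and E: "E \<in> sets lebesgue" and a: "0 < a"
  shows "emeasure lebesgue {x\<in>E. a \<le> \<bar>g x\<bar>}
    \<le> ennreal (1 / a powr p) * (\<integral>\<^sup>+x\<in>E. ennreal (\<bar>g x\<bar> powr p) \<partial>lebesgue)"
proof -
  have "{x\<in>E. a \<le> \<bar>g x\<bar>} \<subseteq> {x\<in>E. 1 \<le> ennreal (1 / a powr p) * ennreal (\<bar>g x\<bar> powr p)}"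
  proof safe
    fix x assume "x \<in> E" "a \<le> \<bar>g x\<bar>"
    then have "a powr p \<le> \<bar>g x\<bar> powr p" using a p by (intro powr_mono2) auto
    then have "1 \<le> (1 / a powr p) * \<bar>g x\<bar> powr p" using a by (simp add: field_simps)
    then have "ennreal 1 \<le> ennreal ((1 / a powr p) * \<bar>g x\<bar> powr p)" by (rule ennreal_leI)
    moreover have "ennreal ((1 / a powr p) * \<bar>g x\<bar> powr p) = ennreal (1 / a powr p) * ennreal (\<bar>g x\<bar> powr p)"
      by (rule ennreal_mult) (use a in auto)
    ultimately show "1 \<le> ennreal (1 / a powr p) * ennreal (\<bar>g x\<bar> powr p)" by (metis ennreal_1)
  qed
  moreover have "{x\<in>E. 1 \<le> ennreal (1 / a powr p) * ennreal (\<bar>g x\<bar> powr p)} \<in> sets lebesgue"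
    using E g by measurable
  ultimately have "emeasure lebesgue {x\<in>E. a \<le> \<bar>g x\<bar>}
      \<le> emeasure lebesgue {x\<in>E. 1 \<le> ennreal (1 / a powr p) * ennreal (\<bar>g x\<bar> powr p)}"
    by (rule emeasure_mono)
  also have "\<dots> \<le> ennreal (1 / a powr p) * (\<integral>\<^sup>+x. ennreal (\<bar>g x\<bar> powr p) * indicator E x \<partial>lebesgue)"
    by (rule nn_integral_Markov_inequality) (use E g in measurable)
  finally show ?thesis by simp
qed

text \<open>A distance of order 2 powr (-j (p + 1)) makes the set where |f j - g j| \<ge> 2 powr -j have
  measure at most 2 powr -j, so Borel-Cantelli applies.\<close>
lemma AE_eventually_abs_diff_less_of_Lp_dist_on:
  fixes f g :: "nat \<Rightarrow> 'a::euclidean_space \<Rightarrow> real"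
  assumes p: "0 < p" and E: "\<And>j. E j \<in> sets lebesgue"
    and f: "\<And>j. f j \<in> borel_measurable lebesgue" and g: "\<And>j. g j \<in> borel_measurable lebesgue"
    and dist: "\<And>j. Lp_dist_on p (E j) (f j) (g j) \<le> ennreal ((1/2)^j * ((1/2)^j) powr p)"
  shows "AE x in lebesgue. \<forall>\<^sub>F j in sequentially. x \<in> E j \<longrightarrow> \<bar>f j x - g j x\<bar> < (1/2)^j"
proof -
  define A where "A j = {x\<in>E j. (1/2::real)^j \<le> \<bar>f j x - g j x\<bar>}" for j
  have A: "A j \<in> sets lebesgue" for j
    unfolding A_def using E f g by measurable
  have A_le: "emeasure lebesgue (A j) \<le> ennreal ((1/2)^j)" for j
  proof -
    have "emeasure lebesgue (A j) \<le> ennreal (1 / ((1/2)^j) powr p) * Lp_dist_on p (E j) (f j) (g j)"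
      unfolding A_def Lp_dist_on_def using E f g by (intro Markov_inequality_powr[OF p]) auto
    also have "\<dots> \<le> ennreal (1 / ((1/2)^j) powr p) * ennreal ((1/2)^j * ((1/2)^j) powr p)"
      by (intro mult_left_mono dist) simp
    also have "\<dots> = ennreal ((1/2)^j)"
      by (simp add: ennreal_mult[symmetric])
    finally show ?thesis .
  qed
  have fin: "emeasure lebesgue (A j) < \<infinity>" for j
    using A_le[of j] by (simp add: le_less_trans)
  have "measure lebesgue (A j) \<le> (1/2)^j" for j
    using A_le[of j] by (simp add: measure_def enn2real_leI)
  then have "summable (\<lambda>j. measure lebesgue (A j))"
    by (intro summable_comparison_test[OF _ summable_geometric[of "1/2"]]) auto
  from borel_cantelli_AE1[OF A fin this]
  have "AE x in lebesgue. \<forall>\<^sub>F j in sequentially. x \<notin> A j" by simp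
  then show ?thesis
    by eventually_elim (auto simp: A_def elim: eventually_mono)
qed

lemma Lp_dist_on_Cauchy_fast_subseq:
  fixes f :: "nat \<Rightarrow> 'a::euclidean_space \<Rightarrow> real" and b :: "nat \<Rightarrow> real"
  assumes Cauchy: "\<And>e. 0 < e \<Longrightarrow> \<exists>J. \<forall>i\<ge>J. \<forall>j\<ge>J. Lp_dist_on p E (f i) (f j) < ennreal e"
    and b: "\<And>j. 0 < b j"
  shows "\<exists>s. strict_mono s \<and> (\<forall>j i. j \<le> i \<longrightarrow> Lp_dist_on p E (f (s j)) (f (s i)) < ennreal (b j))"
proof -
  have "\<forall>\<^sub>F n in sequentially. \<forall>i\<ge>n. \<forall>i'\<ge>n. Lp_dist_on p E (f i) (f i') < ennreal (b j)" for j
  proof -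
    obtain J where J: "\<forall>i\<ge>J. \<forall>i'\<ge>J. Lp_dist_on p E (f i) (f i') < ennreal (b j)"
      using Cauchy[OF b] by blast
    show ?thesis
      unfolding eventually_sequentially by (intro exI[of _ J]) (use J in auto)
  qed
  from strict_mono_choice[where P = "\<lambda>j n. \<forall>i\<ge>n. \<forall>i'\<ge>n. Lp_dist_on p E (f i) (f i') < ennreal (b j)", OF this]
  obtain s where s: "strict_mono s"
    and dist: "\<And>j. \<forall>i\<ge>s j. \<forall>i'\<ge>s j. Lp_dist_on p E (f i) (f i') < ennreal (b j)"
    by blast
  have "Lp_dist_on p E (f (s j)) (f (s i)) < ennreal (b j)" if "j \<le> i" for i j
    using dist[of j] s that by (auto simp: strict_mono_less_eq)
  with s show ?thesis by blast
qed

lemma AE_convergent_of_Lp_dist_on_Suc_le: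
  fixes F :: "nat \<Rightarrow> 'a::euclidean_space \<Rightarrow> real"
  assumes p: "0 < p" and E: "E \<in> sets lebesgue" and F: "\<And>j. F j \<in> borel_measurable lebesgue"
    and dist: "\<And>j. Lp_dist_on p E (F j) (F (Suc j)) \<le> ennreal ((1/2)^j * ((1/2)^j) powr p)"
  shows "AE x in lebesgue. x \<in> E \<longrightarrow> convergent (\<lambda>j. F j x)"
proof -
  from AE_eventually_abs_diff_less_of_Lp_dist_on[of p "\<lambda>_. E" F "\<lambda>j. F (Suc j)", OF p E F F dist]
  have "AE x in lebesgue. \<forall>\<^sub>F j in sequentially. x \<in> E \<longrightarrow> \<bar>F j x - F (Suc j) x\<bar> < (1/2)^j" .
  then show ?thesis
  proof eventually_elim
    case (elim x)
    show ?case
    proof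
      assume "x \<in> E"
      have "\<forall>\<^sub>F j in sequentially. norm (F (Suc j) x - F j x) \<le> (1/2)^j"
        using elim by eventually_elim (use \<open>x \<in> E\<close> in \<open>auto simp: abs_minus_commute\<close>)
      then have "summable (\<lambda>j. F (Suc j) x - F j x)"
        by (rule summable_comparison_test_ev) (simp add: summable_geometric)
      then have "convergent (\<lambda>n. F n x - F 0 x)"
        by (simp add: summable_iff_convergent sum_lessThan_telescope[of "\<lambda>i. F i x"])
      then show "convergent (\<lambda>j. F j x)"
        by (simp add: convergent_diff_const_right_iff)
    qed
  qed
qed

lemma tendsto_power_half_mult_powr:
  fixes p :: real
  assumes "0 \<le> p"
  shows "(\<lambda>j. (1/2::real)^j * ((1/2)^j) powr p) \<longlonglongrightarrow> 0"
proof (rule Lim_null_comparison[OF _ LIMSEQ_power_zero[of "1/2::real"]])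
  have "((1/2::real)^j) powr p \<le> 1" for j
    using assms by (intro powr_le1) (auto simp: power_le_one)
  then show "\<forall>\<^sub>F j in sequentially. norm ((1/2::real)^j * ((1/2)^j) powr p) \<le> (1/2)^j"
    by (simp add: mult_left_le)
qed simp

lemma Lp_dist_on_Cauchy_imp_convergent_subseq:
  fixes f :: "nat \<Rightarrow> 'a::euclidean_space \<Rightarrow> real"
  assumes p: "1 \<le> p" and E: "E \<in> sets lebesgue" and f: "\<And>j. f j \<in> borel_measurable lebesgue"
    and f_fin: "\<And>j. (\<integral>\<^sup>+x\<in>E. ennreal (\<bar>f j x\<bar> powr p) \<partial>lebesgue) < \<infinity>"
    and Cauchy: "\<And>e. 0 < e \<Longrightarrow> \<exists>J. \<forall>i\<ge>J. \<forall>j\<ge>J. Lp_dist_on p E (f i) (f j) < ennreal e"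
  shows "\<exists>s v. strict_mono s \<and> v \<in> borel_measurable lebesgue \<and>
    (\<integral>\<^sup>+x\<in>E. ennreal (\<bar>v x\<bar> powr p) \<partial>lebesgue) < \<infinity> \<and> (\<lambda>j. Lp_dist_on p E (f (s j)) v) \<longlonglongrightarrow> 0"
proof -
  define b where "b j = (1/2::real)^j * ((1/2)^j) powr p" for j :: nat
  obtain s where s: "strict_mono s"
    and F_dist: "\<And>j i. j \<le> i \<Longrightarrow> Lp_dist_on p E (f (s j)) (f (s i)) < ennreal (b j)"
    using Lp_dist_on_Cauchy_fast_subseq[OF Cauchy, of b] by (auto simp: b_def)
  define F where "F j = f (s j)" for j
  have F[measurable]: "F j \<in> borel_measurable lebesgue" for j
    unfolding F_def by (rule f)
  have "AE x in lebesgue. x \<in> E \<longrightarrow> convergent (\<lambda>j. F j x)"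
    using p F_dist[of _ "Suc _"] unfolding F_def b_def
    by (intro AE_convergent_of_Lp_dist_on_Suc_le[OF _ E F[unfolded F_def]]) (auto intro: less_imp_le)
  then have lim: "AE x in lebesgue. x \<in> E \<longrightarrow> (\<lambda>j. F j x) \<longlonglongrightarrow> lim (\<lambda>j. F j x)"
    by eventually_elim (auto simp: convergent_LIMSEQ_iff)
  define v where "v x = lim (\<lambda>j. F j x)" for x
  have v[measurable]: "v \<in> borel_measurable lebesgue"
    unfolding v_def by measurable
  have dist_v: "Lp_dist_on p E (F j) v \<le> ennreal (b j)" for j
  proof -
    have "Lp_dist_on p E (F j) v \<le> liminf (\<lambda>i. Lp_dist_on p E (F j) (F i))"
      using p E lim unfolding v_def by (intro Lp_dist_on_le_liminf) auto
    also have "\<dots> \<le> ennreal (b j)"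
    proof (rule Liminf_le)
      show "\<forall>\<^sub>F i in sequentially. Lp_dist_on p E (F j) (F i) \<le> ennreal (b j)"
        using eventually_ge_at_top[of j]
        by eventually_elim (rule less_imp_le[OF F_dist[folded F_def]])
    qed simp
    finally show ?thesis .
  qed
  have "(\<lambda>j. ennreal (b j)) \<longlonglongrightarrow> 0"
    using tendsto_ennrealI[OF tendsto_power_half_mult_powr[of p]] p unfolding b_def by simp
  then have "(\<lambda>j. Lp_dist_on p E (F j) v) \<longlonglongrightarrow> 0"
    using dist_v tendsto_sandwich[of "\<lambda>_. 0" "\<lambda>j. Lp_dist_on p E (F j) v" sequentially "\<lambda>j. ennreal (b j)"]
    by simp
  moreover have "(\<integral>\<^sup>+x\<in>E. ennreal (\<bar>v x\<bar> powr p) \<partial>lebesgue) < \<infinity>"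
  proof -
    have "(\<integral>\<^sup>+x\<in>E. ennreal (\<bar>v x\<bar> powr p) \<partial>lebesgue) = Lp_dist_on p E (\<lambda>_. 0) v"
      unfolding Lp_dist_on_def by simp
    also have "\<dots> \<le> ennreal (2 powr (p - 1)) * Lp_dist_on p E (\<lambda>_. 0) (F 0)
        + ennreal (2 powr (p - 1)) * Lp_dist_on p E (F 0) v"
      by (rule Lp_dist_on_triangle[OF p E borel_measurable_const F v])
    also have "\<dots> < \<infinity>"
    proof -
      have "Lp_dist_on p E (\<lambda>_. 0) (F 0) < \<infinity>"
        using f_fin[of "s 0"] by (simp add: Lp_dist_on_def F_def)
      moreover have "Lp_dist_on p E (F 0) v < \<infinity>"
        by (rule le_less_trans[OF dist_v[of 0]]) simp
      ultimately show ?thesis by (simp add: ennreal_mult_less_top)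
    qed
    finally show ?thesis .
  qed
  ultimately show ?thesis using s v unfolding F_def by blast
qed

lemma Lp_loc_convergence_imp_AE_convergent_subseq:
  fixes f :: "nat \<Rightarrow> 'a::euclidean_space \<Rightarrow> real"
  assumes p: "0 < p" and f: "\<And>j. f j \<in> borel_measurable lebesgue" and w: "w \<in> borel_measurable lebesgue"
    and conv: "\<And>E. compact E \<Longrightarrow> (\<lambda>j. Lp_dist_on p E (f j) w) \<longlonglongrightarrow> 0"
  shows "\<exists>s. strict_mono s \<and> (AE x in lebesgue. (\<lambda>j. f (s j) x) \<longlonglongrightarrow> w x)"
proof -
  define b where "b j = (1/2::real)^j * ((1/2)^j) powr p" for j :: nat
  have "\<forall>\<^sub>F n in sequentially. Lp_dist_on p (cball 0 (real j)) (f n) w < ennreal (b j)" for j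
    using conv[of "cball 0 (real j)"] by (intro order_tendstoD(2)) (auto simp: b_def)
  then obtain s where s: "strict_mono s"
    and s_dist: "\<And>j. Lp_dist_on p (cball 0 (real j)) (f (s j)) w < ennreal (b j)"
    using strict_mono_choice[where P = "\<lambda>j n. Lp_dist_on p (cball 0 (real j)) (f n) w < ennreal (b j)"]
    by blast
  have "AE x in lebesgue. \<forall>\<^sub>F j in sequentially. x \<in> cball 0 (real j) \<longrightarrow> \<bar>f (s j) x - w x\<bar> < (1/2)^j"
    using p f w s_dist
    by (intro AE_eventually_abs_diff_less_of_Lp_dist_on) (auto simp: b_def less_imp_le)
  then have "AE x in lebesgue. (\<lambda>j. f (s j) x) \<longlonglongrightarrow> w x"
  proof eventually_elim
    case (elim x)
    obtain n :: nat where n: "norm x \<le> real n" using real_arch_simple by blast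
    have "\<forall>\<^sub>F j in sequentially. x \<in> cball 0 (real j)"
      using eventually_ge_at_top[of n] by eventually_elim (use n in auto)
    with elim have "\<forall>\<^sub>F j in sequentially. norm (f (s j) x - w x) \<le> (1/2)^j"
      by eventually_elim auto
    then have "(\<lambda>j. f (s j) x - w x) \<longlonglongrightarrow> 0"
      by (rule Lim_null_comparison) (rule LIMSEQ_power_zero, simp)
    then show ?case by (simp add: LIM_zero_iff)
  qed
  with s show ?thesis by blast
qed

lemma bounded_finite_family_convergent_subseq:
  fixes a :: "'k \<Rightarrow> nat \<Rightarrow> real"
  assumes "finite K" and "\<And>k. k \<in> K \<Longrightarrow> bounded (range (a k))"
  shows "\<exists>r. strict_mono r \<and> (\<forall>k\<in>K. convergent (\<lambda>j. a k (r j)))"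
  using assms
proof (induction K rule: finite_induct)
  case empty
  show ?case by (intro exI[of _ id]) (simp add: strict_mono_def)
next
  case (insert k0 K)
  then obtain r where r: "strict_mono r" and conv: "\<forall>k\<in>K. convergent (\<lambda>j. a k (r j))" by blast
  have "bounded (range (\<lambda>j. a k0 (r j)))"
    using insert.prems[of k0] by (rule bounded_subset) auto
  then obtain l r' where r': "strict_mono r'" and l: "((\<lambda>j. a k0 (r j)) \<circ> r') \<longlonglongrightarrow> l"
    using bounded_imp_convergent_subsequence by blast
  show ?case
  proof (intro exI conjI ballI)
    show "strict_mono (r \<circ> r')" using r r' by (rule strict_mono_o)
    fix k assume "k \<in> insert k0 K"
    then show "convergent (\<lambda>j. a k ((r \<circ> r') j))"
    proof
      assume "k = k0"
      then show ?thesis using l by (auto simp: convergent_def o_def)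
    next
      assume "k \<in> K"
      then have "convergent ((\<lambda>j. a k (r j)) \<circ> r')"
        using conv r' by (intro convergent_subseq_convergent) auto
      then show ?thesis by (simp add: o_def)
    qed
  qed
qed

lemma diagonal_convergent_subseq:
  fixes c :: "nat \<Rightarrow> 'k \<Rightarrow> nat \<Rightarrow> real"
  assumes fin: "\<And>n. finite (K n)" and bdd: "\<And>n k. k \<in> K n \<Longrightarrow> bounded (range (c n k))"
  shows "\<exists>s. strict_mono s \<and> (\<forall>n. \<forall>k\<in>K n. convergent (\<lambda>j. c n k (s j)))"
proof -
  interpret S: subseqs "\<lambda>n s. \<forall>k\<in>K n. convergent (\<lambda>j. c n k (s j))"
  proof
    fix n and s :: "nat \<Rightarrow> nat"
    have "bounded (range (\<lambda>j. c n k (s j)))" if "k \<in> K n" for k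
      using bdd[OF that] by (rule bounded_subset) auto
    then obtain r where "strict_mono r" "\<forall>k\<in>K n. convergent (\<lambda>j. c n k (s (r j)))"
      using bounded_finite_family_convergent_subseq[of "K n" "\<lambda>k j. c n k (s j)"] fin by blast
    then show "\<exists>r. strict_mono r \<and> (\<forall>k\<in>K n. convergent (\<lambda>j. c n k ((s \<circ> r) j)))"
      by (auto simp: o_def)
  qed
  have "convergent (\<lambda>j. c n k (S.diagseq j))" if "k \<in> K n" for n k
  proof -
    have "\<forall>k\<in>K n. convergent (\<lambda>j. c n k ((S.diagseq \<circ> (+) (Suc n)) j))"
    proof (rule S.diagseq_holds)
      fix r s :: "nat \<Rightarrow> nat" and n
      assume r: "strict_mono r" and conv: "\<forall>k\<in>K n. convergent (\<lambda>j. c n k (s j))"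
      show "\<forall>k\<in>K n. convergent (\<lambda>j. c n k ((s \<circ> r) j))"
      proof
        fix k assume "k \<in> K n"
        then have "convergent ((\<lambda>j. c n k (s j)) \<circ> r)"
          using conv r by (intro convergent_subseq_convergent) auto
        then show "convergent (\<lambda>j. c n k ((s \<circ> r) j))" by (simp add: o_def)
      qed
    qed
    then have "convergent (\<lambda>j. c n k (S.diagseq (j + Suc n)))"
      using that by (simp add: o_def add.commute)
    then show ?thesis
      using convergent_ignore_initial_segment[of "\<lambda>j. c n k (S.diagseq j)" "Suc n"] by simp
  qed
  then show ?thesis using S.subseq_diagseq by blast
qed

lemma Lp_dist_on_Cauchy_of_approx:
  fixes f :: "nat \<Rightarrow> 'a::euclidean_space \<Rightarrow> real"
  assumes p: "1 \<le> p" and E: "E \<in> sets lebesgue" and f: "\<And>j. f j \<in> borel_measurable lebesgue"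
    and approx: "\<And>e. 0 < e \<Longrightarrow>
      \<exists>g\<in>borel_measurable lebesgue. \<forall>\<^sub>F j in sequentially. Lp_dist_on p E (f j) g \<le> ennreal e"
    and e: "0 < e"
  shows "\<exists>J. \<forall>i\<ge>J. \<forall>j\<ge>J. Lp_dist_on p E (f i) (f j) < ennreal e"
proof -
  define L where "L = 2 powr (p - 1)"
  have L: "0 < L" unfolding L_def by simp
  obtain g J where g: "g \<in> borel_measurable lebesgue"
    and J: "\<And>j. J \<le> j \<Longrightarrow> Lp_dist_on p E (f j) g \<le> ennreal (e / (4 * L))"
    using approx[of "e / (4 * L)"] e L by (auto simp: eventually_sequentially)
  show ?thesis
  proof (intro exI allI impI)
    fix i j assume "J \<le> i" "J \<le> j"
    have "Lp_dist_on p E (f i) (f j)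
        \<le> ennreal L * Lp_dist_on p E (f i) g + ennreal L * Lp_dist_on p E g (f j)"
      unfolding L_def by (rule Lp_dist_on_triangle[OF p E f g f])
    also have "\<dots> \<le> ennreal L * ennreal (e / (4 * L)) + ennreal L * ennreal (e / (4 * L))"
      using J[OF \<open>J \<le> i\<close>] J[OF \<open>J \<le> j\<close>]
      by (intro add_mono mult_left_mono) (simp_all add: Lp_dist_on_commute)
    also have "\<dots> = ennreal (e / 2)"
      using L e by (simp add: ennreal_mult[symmetric] ennreal_plus[symmetric] del: ennreal_plus)
    also have "\<dots> < ennreal e"
      using e by (simp add: ennreal_lessI)
    finally show "Lp_dist_on p E (f i) (f j) < ennreal e" .
  qed
qed

lemma tendsto_Lp_dist_on_grid_step:
  fixes a :: "nat \<Rightarrow> ('a::euclidean_space \<Rightarrow> int) \<Rightarrow> real"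
  assumes p: "0 < p" and h: "0 < h" and fin: "finite (grid_index h ` E)"
    and lim: "\<And>k. k \<in> grid_index h ` E \<Longrightarrow> (\<lambda>j. a j k) \<longlonglongrightarrow> l k"
  shows "(\<lambda>j. Lp_dist_on p E (grid_step h E (a j)) (grid_step h E l)) \<longlonglongrightarrow> 0"
proof -
  define S where "S j = (\<Sum>k\<in>grid_index h ` E. \<bar>a j k - l k\<bar> powr p * measure lebesgue (grid_cube h k))"
    for j
  have "S \<longlonglongrightarrow> (\<Sum>k\<in>grid_index h ` E. \<bar>l k - l k\<bar> powr p * measure lebesgue (grid_cube h k))"
    unfolding S_def using lim p by (intro tendsto_intros tendsto_powr') auto
  then have "(\<lambda>j. ennreal (S j)) \<longlonglongrightarrow> ennreal 0"
    using p by (intro tendsto_ennrealI) simp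
  then show ?thesis
    using Lp_dist_on_grid_step_le[OF h fin, where p = p and a = "a _" and b = l]
      tendsto_sandwich[of "\<lambda>_. 0" _ sequentially "\<lambda>j. ennreal (S j)"]
    unfolding S_def by simp
qed

lemma Lp_dist_on_convergent_subseq_of_grid_approx:
  fixes f :: "nat \<Rightarrow> 'a::euclidean_space \<Rightarrow> real"
  assumes p: "1 \<le> p" and E: "compact E" and f: "\<And>j. in_Lp p (f j)"
    and bound: "\<And>j. (\<integral>\<^sup>+x. ennreal (\<bar>f j x\<bar> powr p) \<partial>lebesgue) \<le> ennreal M" and M: "0 \<le> M"
    and approx: "\<And>e. 0 < e \<Longrightarrow> \<exists>n. \<forall>\<^sub>F j in sequentially.
      Lp_dist_on p E (f j) (grid_step ((1/2)^n) E (cube_avg ((1/2)^n) (f j))) \<le> ennreal e"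
  shows "\<exists>s v. strict_mono s \<and> v \<in> borel_measurable lebesgue \<and>
    (\<integral>\<^sup>+x\<in>E. ennreal (\<bar>v x\<bar> powr p) \<partial>lebesgue) < \<infinity> \<and> (\<lambda>j. Lp_dist_on p E (f (s j)) v) \<longlonglongrightarrow> 0"
proof -
  define h where "h n = (1/2::real)^n" for n :: nat
  define K where "K n = grid_index (h n) ` E" for n
  have h: "0 < h n" for n unfolding h_def by simp
  have K: "finite (K n)" for n
    unfolding K_def using finite_grid_index_image[OF h compact_imp_bounded[OF E]] .
  have E_sets: "E \<in> sets lebesgue" using lmeasurable_compact[OF E] by (rule fmeasurableD)
  have fm: "f j \<in> borel_measurable lebesgue" for j using f unfolding in_Lp_def by blast
  have "bounded (range (\<lambda>j. cube_avg (h n) (f j) k))" if k: "k \<in> K n" for n k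
  proof -
    obtain x where "k = grid_index (h n) x" using k unfolding K_def by auto
    then show ?thesis
      unfolding bounded_iff using abs_cube_avg_le[OF p f h bound M] by auto
  qed
  then obtain s where s: "strict_mono s"
    and conv: "\<And>n k. k \<in> K n \<Longrightarrow> convergent (\<lambda>j. cube_avg (h n) (f (s j)) k)"
    using diagonal_convergent_subseq[of K "\<lambda>n k j. cube_avg (h n) (f j) k"] K by blast
  define l where "l n k = lim (\<lambda>j. cube_avg (h n) (f (s j)) k)" for n k
  have "\<exists>g\<in>borel_measurable lebesgue. \<forall>\<^sub>F j in sequentially. Lp_dist_on p E (f (s j)) g \<le> ennreal e"
    if e: "0 < e" for e
  proof -
    define L where "L = 2 powr (p - 1)"
    have L: "0 < L" unfolding L_def by simp
    obtain n where n: "\<forall>\<^sub>F j in sequentially.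
        Lp_dist_on p E (f j) (grid_step (h n) E (cube_avg (h n) (f j))) \<le> ennreal (e / (2 * L))"
      using approx[of "e / (2 * L)"] e L unfolding h_def by auto
    have "(\<lambda>j. Lp_dist_on p E (grid_step (h n) E (cube_avg (h n) (f (s j)))) (grid_step (h n) E (l n)))
        \<longlonglongrightarrow> 0"
      using p conv unfolding l_def K_def
      by (intro tendsto_Lp_dist_on_grid_step h K[unfolded K_def]) (auto simp: convergent_LIMSEQ_iff)
    then have "\<forall>\<^sub>F j in sequentially. Lp_dist_on p E (grid_step (h n) E (cube_avg (h n) (f (s j))))
        (grid_step (h n) E (l n)) < ennreal (e / (2 * L))"
      using e L by (intro order_tendstoD(2)) auto
    with eventually_subseq[OF s n]
    have "\<forall>\<^sub>F j in sequentially. Lp_dist_on p E (f (s j)) (grid_step (h n) E (l n)) \<le> ennreal e"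
    proof eventually_elim
      case (elim j)
      have "Lp_dist_on p E (f (s j)) (grid_step (h n) E (l n))
          \<le> ennreal L * Lp_dist_on p E (f (s j)) (grid_step (h n) E (cube_avg (h n) (f (s j))))
            + ennreal L * Lp_dist_on p E (grid_step (h n) E (cube_avg (h n) (f (s j)))) (grid_step (h n) E (l n))"
        unfolding L_def
        by (rule Lp_dist_on_triangle[OF p E_sets fm borel_measurable_grid_step[OF h] borel_measurable_grid_step[OF h]])
      also have "\<dots> \<le> ennreal L * ennreal (e / (2 * L)) + ennreal L * ennreal (e / (2 * L))"
        using elim by (intro add_mono mult_left_mono) auto
      also have "\<dots> = ennreal e"
        using L e by (simp add: ennreal_mult[symmetric] ennreal_plus[symmetric] del: ennreal_plus)
      finally show ?case .
    qed
    then show ?thesis using borel_measurable_grid_step[OF h] by blast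
  qed
  then have Cauchy: "\<exists>J. \<forall>i\<ge>J. \<forall>j\<ge>J. Lp_dist_on p E (f (s i)) (f (s j)) < ennreal e" if "0 < e" for e
    using Lp_dist_on_Cauchy_of_approx[OF p E_sets fm] that by blast
  have "(\<integral>\<^sup>+x\<in>E. ennreal (\<bar>f (s j) x\<bar> powr p) \<partial>lebesgue) < \<infinity>" for j
  proof -
    have "(\<integral>\<^sup>+x\<in>E. ennreal (\<bar>f (s j) x\<bar> powr p) \<partial>lebesgue) \<le> (\<integral>\<^sup>+x. ennreal (\<bar>f (s j) x\<bar> powr p) \<partial>lebesgue)"
      by (intro nn_integral_mono) (auto split: split_indicator)
    also have "\<dots> \<le> ennreal M" by (rule bound)
    finally show ?thesis by (rule le_less_trans) simp
  qed
  from Lp_dist_on_Cauchy_imp_convergent_subseq[OF p E_sets fm this Cauchy]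
  obtain s' v where "strict_mono s'" "v \<in> borel_measurable lebesgue"
    "(\<integral>\<^sup>+x\<in>E. ennreal (\<bar>v x\<bar> powr p) \<partial>lebesgue) < \<infinity>" "(\<lambda>j. Lp_dist_on p E (f (s (s' j))) v) \<longlonglongrightarrow> 0"
    by blast
  then show ?thesis
    using strict_mono_o[OF s \<open>strict_mono s'\<close>] by (intro exI[of _ "s \<circ> s'"] exI[of _ v]) auto
qed

lemma ennreal_mult_liminf_le:
  fixes A B :: "nat \<Rightarrow> ennreal"
  assumes A: "A \<longlonglongrightarrow> a" and fin: "a \<noteq> top"
  shows "a * liminf B \<le> liminf (\<lambda>j. A j * B j)"
proof (cases "a = 0")
  case False
  have enn2ereal_liminf: "enn2ereal (liminf X) = liminf (\<lambda>j. enn2ereal (X j))" for X :: "nat \<Rightarrow> ennreal"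
    by (rule Liminf_compose_continuous_mono[symmetric])
      (auto simp: continuous_on_enn2ereal mono_def less_eq_ennreal.rep_eq)
  have "0 < enn2ereal a" using False
    by (metis enn2ereal_nonneg order_le_less zero_ennreal.rep_eq e2ennreal_enn2ereal)
  moreover have "(\<lambda>j. enn2ereal (A j)) \<longlonglongrightarrow> enn2ereal a" using A by simp
  moreover have "enn2ereal a \<noteq> \<infinity>" using fin by simp
  ultimately have "liminf (\<lambda>j. enn2ereal (A j) * enn2ereal (B j)) = enn2ereal a * liminf (\<lambda>j. enn2ereal (B j))"
    by (intro ereal_liminf_lim_mult)
  then have "enn2ereal (liminf (\<lambda>j. A j * B j)) = enn2ereal (a * liminf B)"
    by (simp add: enn2ereal_liminf times_ennreal.rep_eq)
  then show ?thesis by (simp add: enn2ereal_inject)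
qed simp

lemma Liminf_at_right_le_liminf:
  fixes g :: "real \<Rightarrow> ennreal" and \<tau> :: "nat \<Rightarrow> real"
  assumes "\<tau> \<longlonglongrightarrow> 0" and "\<And>j. 0 < \<tau> j"
  shows "Liminf (at_right 0) g \<le> liminf (\<lambda>j. g (\<tau> j))"
proof -
  have "\<forall>\<^sub>F j in sequentially. \<tau> j \<in> {0<..} \<and> \<tau> j \<noteq> 0"
    using assms(2) by (intro always_eventually) (auto simp: less_imp_neq[symmetric])
  then have \<tau>: "filterlim \<tau> (at_right 0) sequentially"
    unfolding filterlim_at using assms(1) by auto
  show ?thesis
  proof (subst le_Liminf_iff, intro allI impI)
    fix y assume "y < Liminf (at_right 0) g"
    then have "\<forall>\<^sub>F s in at_right 0. y < g s" by (rule less_LiminfD)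
    then show "\<forall>\<^sub>F j in sequentially. y < g (\<tau> j)"
      using \<tau> by (auto simp: filterlim_iff)
  qed
qed

lemma abs_diff_powr_mult_Liminf_le_liminf:
  fixes f :: "nat \<Rightarrow> 'a::euclidean_space \<Rightarrow> real" and \<rho> :: "real \<Rightarrow> 'a \<Rightarrow> real"
  assumes p: "0 < p" and x: "(\<lambda>j. f j x) \<longlonglongrightarrow> w x" and y: "(\<lambda>j. f j y) \<longlonglongrightarrow> w y"
    and \<tau>: "\<tau> \<longlonglongrightarrow> 0" "\<And>j. 0 < \<tau> j"
  shows "ennreal (\<bar>w x - w y\<bar> powr p) * Liminf (at_right 0) (\<lambda>s. ennreal (\<rho> s (x - y) / norm (x - y) powr p))
    \<le> liminf (\<lambda>j. ennreal (\<bar>f j x - f j y\<bar> powr p / norm (x - y) powr p * \<rho> (\<tau> j) (x - y)))"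
proof -
  define B where "B j = ennreal (\<rho> (\<tau> j) (x - y) / norm (x - y) powr p)" for j
  have "(\<lambda>j. \<bar>f j x - f j y\<bar> powr p) \<longlonglongrightarrow> \<bar>w x - w y\<bar> powr p"
    using p x y by (intro tendsto_intros) auto
  then have A: "(\<lambda>j. ennreal (\<bar>f j x - f j y\<bar> powr p)) \<longlonglongrightarrow> ennreal (\<bar>w x - w y\<bar> powr p)"
    by (rule tendsto_ennrealI)
  have "ennreal (\<bar>w x - w y\<bar> powr p) * Liminf (at_right 0) (\<lambda>s. ennreal (\<rho> s (x - y) / norm (x - y) powr p))
      \<le> ennreal (\<bar>w x - w y\<bar> powr p) * liminf B"
    unfolding B_def by (intro mult_left_mono Liminf_at_right_le_liminf[OF \<tau>]) simp
  also have "\<dots> \<le> liminf (\<lambda>j. ennreal (\<bar>f j x - f j y\<bar> powr p) * B j)"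
    by (rule ennreal_mult_liminf_le[OF A]) simp
  also have "(\<lambda>j. ennreal (\<bar>f j x - f j y\<bar> powr p) * B j)
      = (\<lambda>j. ennreal (\<bar>f j x - f j y\<bar> powr p / norm (x - y) powr p * \<rho> (\<tau> j) (x - y)))"
  proof
    fix j
    have "\<bar>f j x - f j y\<bar> powr p / norm (x - y) powr p * \<rho> (\<tau> j) (x - y)
        = \<bar>f j x - f j y\<bar> powr p * (\<rho> (\<tau> j) (x - y) / norm (x - y) powr p)"
      by simp
    then show "ennreal (\<bar>f j x - f j y\<bar> powr p) * B j
        = ennreal (\<bar>f j x - f j y\<bar> powr p / norm (x - y) powr p * \<rho> (\<tau> j) (x - y))"
      unfolding B_def by (simp only: ennreal_mult'[OF powr_ge_zero])
  qed
  finally show ?thesis .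
qed

text \<open>Fatou's lemma, applied twice to the double integral.\<close>
lemma kernel_energy_le_of_AE_limit:
  fixes f :: "nat \<Rightarrow> 'a::euclidean_space \<Rightarrow> real" and \<rho> :: "real \<Rightarrow> 'a \<Rightarrow> real"
  assumes p: "0 < p" and f: "\<And>j. f j \<in> borel_measurable lebesgue"
    and lim: "AE x in lebesgue. (\<lambda>j. f j x) \<longlonglongrightarrow> w x"
    and \<tau>: "\<tau> \<longlonglongrightarrow> 0" "\<And>j. 0 < \<tau> j" and \<rho>: "\<And>j. \<rho> (\<tau> j) \<in> borel_measurable lebesgue"
    and F: "\<And>j. F_tp \<rho> (\<tau> j) p (f j) \<le> C"
  shows "(\<integral>\<^sup>+x. \<integral>\<^sup>+y. ennreal (\<bar>w x - w y\<bar> powr p) *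
      Liminf (at_right 0) (\<lambda>s. ennreal (\<rho> s (x - y) / norm (x - y) powr p)) \<partial>lebesgue \<partial>lebesgue) \<le> C"
proof -
  define G where "G j x y = ennreal (\<bar>f j x - f j y\<bar> powr p / norm (x - y) powr p * \<rho> (\<tau> j) (x - y))"
    for j x y
  have "(\<integral>\<^sup>+x. \<integral>\<^sup>+y. ennreal (\<bar>w x - w y\<bar> powr p) *
      Liminf (at_right 0) (\<lambda>s. ennreal (\<rho> s (x - y) / norm (x - y) powr p)) \<partial>lebesgue \<partial>lebesgue)
      \<le> (\<integral>\<^sup>+x. \<integral>\<^sup>+y. liminf (\<lambda>j. G j x y) \<partial>lebesgue \<partial>lebesgue)"
  proof (rule nn_integral_mono_AE)
    show "AE x in lebesgue. (\<integral>\<^sup>+y. ennreal (\<bar>w x - w y\<bar> powr p) *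
        Liminf (at_right 0) (\<lambda>s. ennreal (\<rho> s (x - y) / norm (x - y) powr p)) \<partial>lebesgue)
        \<le> (\<integral>\<^sup>+y. liminf (\<lambda>j. G j x y) \<partial>lebesgue)"
      using lim
    proof eventually_elim
      case (elim x)
      show ?case
      proof (rule nn_integral_mono_AE)
        show "AE y in lebesgue. ennreal (\<bar>w x - w y\<bar> powr p) *
            Liminf (at_right 0) (\<lambda>s. ennreal (\<rho> s (x - y) / norm (x - y) powr p)) \<le> liminf (\<lambda>j. G j x y)"
          using lim unfolding G_def
          by eventually_elim (rule abs_diff_powr_mult_Liminf_le_liminf[where f = f and w = w and \<rho> = \<rho>, OF p elim _ \<tau>])
      qed
    qed
  qed
  also have "\<dots> \<le> (\<integral>\<^sup>+x. liminf (\<lambda>j. \<integral>\<^sup>+y. G j x y \<partial>lebesgue) \<partial>lebesgue)"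
    unfolding G_def
    by (intro nn_integral_mono nn_integral_liminf borel_measurable_difference_quotient f \<rho>)
  also have "\<dots> \<le> liminf (\<lambda>j. \<integral>\<^sup>+x. \<integral>\<^sup>+y. G j x y \<partial>lebesgue \<partial>lebesgue)"
    unfolding G_def
    by (intro nn_integral_liminf borel_measurable_difference_quotient_integral f \<rho>)
  also have "\<dots> \<le> C"
    using F by (intro Liminf_le) (auto simp: F_tp_def G_def)
  finally show ?thesis .
qed

lemma in_Lp_of_AE_limit:
  fixes f :: "nat \<Rightarrow> 'a::euclidean_space \<Rightarrow> real"
  assumes p: "0 < p" and f: "\<And>j. f j \<in> borel_measurable lebesgue" and w: "w \<in> borel_measurable lebesgue"
    and lim: "AE x in lebesgue. (\<lambda>j. f j x) \<longlonglongrightarrow> w x"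
    and bound: "\<And>j. (\<integral>\<^sup>+x. ennreal (\<bar>f j x\<bar> powr p) \<partial>lebesgue) \<le> ennreal M"
  shows "in_Lp p w"
proof -
  have "(\<integral>\<^sup>+x. ennreal (\<bar>w x\<bar> powr p) \<partial>lebesgue) = Lp_dist_on p UNIV (\<lambda>_. 0) w"
    by (simp add: Lp_dist_on_def)
  also have "\<dots> \<le> liminf (\<lambda>j. Lp_dist_on p UNIV (\<lambda>_. 0) (f j))"
    using lim by (intro Lp_dist_on_le_liminf[OF p] f w) auto
  also have "\<dots> \<le> ennreal M"
    using bound by (intro Liminf_le) (auto simp: Lp_dist_on_def)
  finally have "(\<integral>\<^sup>+x. ennreal (\<bar>w x\<bar> powr p) \<partial>lebesgue) < \<infinity>"
    by (rule le_less_trans) simp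
  with w show ?thesis unfolding in_Lp_def by blast
qed

lemma exists_power_half_bracket:
  fixes a :: real
  assumes a: "0 < a" "a \<le> 1"
  shows "\<exists>n. (1/2)^n \<le> a \<and> a < 2 * (1/2)^n"
proof -
  obtain n0 where "(1/2::real)^n0 < a" using real_arch_pow_inv[OF a(1), of "1/2"] by auto
  then have ex: "\<exists>n. (1/2::real)^n \<le> a" by (auto intro: less_imp_le)
  define n where "n = (LEAST n. (1/2::real)^n \<le> a)"
  have n: "(1/2::real)^n \<le> a" unfolding n_def by (rule LeastI_ex[OF ex])
  show ?thesis
  proof (cases n)
    case 0
    then show ?thesis using n a by (intro exI[of _ 0]) simp
  next
    case (Suc m)
    then have "\<not> (1/2::real)^m \<le> a"
      using not_less_Least[of m "\<lambda>n. (1/2::real)^n \<le> a"] unfolding n_def by auto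
    then have "a < 2 * (1/2::real)^n" using Suc by simp
    then show ?thesis using n by blast
  qed
qed

lemma exists_dyadic_mesh:
  fixes N \<delta> :: real
  assumes "1 \<le> N" "0 < \<delta>" "\<delta> \<le> 1"
  shows "\<exists>n. N * (1/2)^n \<le> \<delta> \<and> \<delta> / ((1/2)^n / 2) \<le> 4 * N"
proof -
  obtain n where "(1/2)^n \<le> \<delta> / N" "\<delta> / N < 2 * (1/2)^n"
    using exists_power_half_bracket[of "\<delta> / N"] assms by (auto simp: divide_le_eq)
  then show ?thesis
    using assms by (intro exI[of _ n]) (auto simp: field_simps)
qed

text \<open>\<epsilon> is chosen so that, for the dyadic mesh h with N h \<le> \<delta> < 2 N h, the constant
  of the cube estimate times C is at most e.\<close>
lemma Lp_dist_on_grid_step_cube_avg_eventually_le: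
  fixes \<rho> :: "real \<Rightarrow> 'a::euclidean_space \<Rightarrow> real" and f :: "nat \<Rightarrow> 'a \<Rightarrow> real"
  assumes p: "1 \<le> p"
    and \<rho>_lower: "\<And>\<epsilon>. \<epsilon> > 0 \<Longrightarrow> \<exists>\<delta>\<in>{0<..1}. \<forall>s\<in>{0<..<\<delta>}.
      AE z in lebesgue. z \<in> ball 0 \<delta> \<longrightarrow> \<rho> s z / norm z powr p \<ge> 1 / (\<epsilon> * \<delta> ^ DIM('a))"
    and \<rho>: "\<And>j. \<rho> (\<tau> j) \<in> borel_measurable lebesgue" and \<tau>: "\<And>j. 0 < \<tau> j" "\<tau> \<longlonglongrightarrow> 0"
    and f: "\<And>j. in_Lp p (f j)" and F: "\<And>j. F_tp \<rho> (\<tau> j) p (f j) \<le> ennreal C"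
    and E: "bounded E" and e: "0 < e"
  shows "\<exists>n. \<forall>\<^sub>F j in sequentially.
    Lp_dist_on p E (f j) (grid_step ((1/2)^n) E (cube_avg ((1/2)^n) (f j))) \<le> ennreal e"
proof -
  define N where "N = real DIM('a)"
  define \<omega> where "\<omega> = unit_ball_vol N"
  define m where "m = max C 0 + 1"
  define \<eta> where "\<eta> = e * \<omega> / ((4 * N) ^ DIM('a) * m)"
  have N: "1 \<le> N" unfolding N_def by simp
  have \<omega>: "0 < \<omega>" unfolding \<omega>_def using N by simp
  have m: "0 < m" "C \<le> m" unfolding m_def by auto
  have \<eta>: "0 < \<eta>" unfolding \<eta>_def using e \<omega> N m by simp
  obtain \<delta> where \<delta>: "0 < \<delta>" "\<delta> \<le> 1" and low: "\<And>s. s \<in> {0<..<\<delta>} \<Longrightarrow>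
      AE z in lebesgue. z \<in> ball 0 \<delta> \<longrightarrow> 1 / (\<eta> * \<delta> ^ DIM('a)) \<le> \<rho> s z / norm z powr p"
    using \<rho>_lower[OF \<eta>] by auto
  obtain n where n: "N * (1/2)^n \<le> \<delta>" "\<delta> / ((1/2)^n / 2) \<le> 4 * N"
    using exists_dyadic_mesh[OF N \<delta>] by blast
  define h where "h = (1/2::real)^n"
  define c where "c = \<eta> * \<delta> ^ DIM('a)"
  have h: "0 < h" "N * h \<le> \<delta>" "\<delta> / (h/2) \<le> 4 * N"
    using n unfolding h_def by auto
  have c: "0 < c" unfolding c_def using \<eta> \<delta> by simp
  have "c / (\<omega> * (h/2) ^ DIM('a)) = \<eta> / \<omega> * (\<delta> / (h/2)) ^ DIM('a)"
    unfolding c_def by (simp add: power_divide)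
  also have "\<dots> \<le> \<eta> / \<omega> * (4 * N) ^ DIM('a)"
    using h \<delta> \<eta> \<omega> by (intro mult_left_mono power_mono) auto
  also have "\<dots> = e / m"
    unfolding \<eta>_def using \<omega> N m by (simp add: field_simps)
  finally have "c / (\<omega> * (h/2) ^ DIM('a)) \<le> e / m" .
  then have "ennreal (c / (\<omega> * (h/2) ^ DIM('a))) * ennreal C \<le> ennreal (e / m) * ennreal m"
    using m by (intro mult_mono ennreal_leI) auto
  also have "\<dots> = ennreal e"
    using e m by (simp flip: ennreal_mult)
  finally have const: "ennreal (c / (\<omega> * (h/2) ^ DIM('a))) * ennreal C \<le> ennreal e" .
  have "\<forall>\<^sub>F j in sequentially. \<tau> j < \<delta>"
    using \<tau>(2) \<delta> by (intro order_tendstoD(2)) auto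
  then have "\<forall>\<^sub>F j in sequentially. Lp_dist_on p E (f j) (grid_step h E (cube_avg h (f j))) \<le> ennreal e"
  proof eventually_elim
    case (elim j)
    have "AE z in lebesgue. z \<in> ball 0 \<delta> \<longrightarrow> 1 / c \<le> \<rho> (\<tau> j) z / norm z powr p"
      using low[of "\<tau> j"] \<tau>(1)[of j] elim unfolding c_def by simp
    then have "AE z in lebesgue. z \<in> ball 0 (N * h) \<longrightarrow> 1 / c \<le> \<rho> (\<tau> j) z / norm z powr p"
      by eventually_elim (use h(2) in auto)
    then have "Lp_dist_on p E (f j) (grid_step h E (cube_avg h (f j)))
        \<le> ennreal (c / (\<omega> * (h/2) ^ DIM('a))) * F_tp \<rho> (\<tau> j) p (f j)"
      unfolding F_tp_def \<omega>_def N_def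
      by (rule Lp_dist_on_grid_step_cube_avg_le[OF p f \<rho> h(1) c E])
    also have "\<dots> \<le> ennreal e"
      using F[of j] const by (meson mult_left_mono order_trans zero_le)
    finally show ?case .
  qed
  then show ?thesis unfolding h_def by blast
qed

lemma nn_integral_abs_powr_le_of_Lp_norm_le:
  assumes f: "in_Lp p f" and p: "0 < p" and le: "ennreal (Lp_norm p f) \<le> ennreal C"
  shows "(\<integral>\<^sup>+x. ennreal (\<bar>f x\<bar> powr p) \<partial>lebesgue) \<le> ennreal (max C 0 powr p)"
proof -
  have norm_nonneg: "0 \<le> Lp_norm p f"
    unfolding Lp_norm_def by simp
  with le have "Lp_norm p f \<le> max C 0"
    by (auto simp: ennreal_le_iff2)
  with norm_nonneg have "Lp_norm p f powr p \<le> max C 0 powr p"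
    using p by (intro powr_mono2) auto
  then show ?thesis
    using nn_integral_abs_powr_eq_Lp_norm[OF f p] by (simp add: ennreal_leI)
qed

lemma loc_precompact_seq_of_F_tp_bounded:
  fixes \<rho> :: "real \<Rightarrow> 'a::euclidean_space \<Rightarrow> real" and u :: "nat \<Rightarrow> 'a \<Rightarrow> real"
  assumes p: "1 \<le> p"
    and \<rho>_lower: "\<And>\<epsilon>. \<epsilon> > 0 \<Longrightarrow> \<exists>\<delta>\<in>{0<..1}. \<forall>s\<in>{0<..<\<delta>}.
      AE z in lebesgue. z \<in> ball 0 \<delta> \<longrightarrow> \<rho> s z / norm z powr p \<ge> 1 / (\<epsilon> * \<delta> ^ DIM('a))"
    and \<rho>: "\<And>k. \<rho> (t k) \<in> borel_measurable lebesgue" and t: "\<And>k. 0 < t k" "t \<longlonglongrightarrow> 0"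
    and u: "\<And>k. in_Lp p (u k)"
    and u_bound: "\<And>k. (\<integral>\<^sup>+x. ennreal (\<bar>u k x\<bar> powr p) \<partial>lebesgue) \<le> ennreal M" and M: "0 \<le> M"
    and F: "\<And>k. F_tp \<rho> (t k) p (u k) \<le> ennreal C"
  shows "loc_precompact_seq p u"
  unfolding loc_precompact_seq_def
proof (intro allI impI, elim conjE)
  fix E :: "'a set" and r :: "nat \<Rightarrow> nat"
  assume E: "compact E" and r: "strict_mono r"
  have "(\<lambda>j. t (r j)) \<longlonglongrightarrow> 0"
    using LIMSEQ_subseq_LIMSEQ[OF t(2) r] by (simp add: o_def)
  then have "\<exists>n. \<forall>\<^sub>F j in sequentially. Lp_dist_on p E (u (r j))
      (grid_step ((1/2)^n) E (cube_avg ((1/2)^n) (u (r j)))) \<le> ennreal e" if "0 < e" for e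
    using Lp_dist_on_grid_step_cube_avg_eventually_le[where \<tau> = "\<lambda>j. t (r j)" and f = "\<lambda>j. u (r j)",
        OF p \<rho>_lower \<rho> t(1) _ u F compact_imp_bounded[OF E] that] by blast
  then show "\<exists>s v. strict_mono s \<and> v \<in> borel_measurable lebesgue \<and>
      (\<integral>\<^sup>+x\<in>E. ennreal (\<bar>v x\<bar> powr p) \<partial>lebesgue) < \<infinity> \<and> (\<lambda>j. Lp_dist_on p E (u (r (s j))) v) \<longlonglongrightarrow> 0"
    by (rule Lp_dist_on_convergent_subseq_of_grid_approx[where f = "\<lambda>j. u (r j)", OF p E u u_bound M])
qed

lemma in_W_kernel_of_Lp_loc_limit:
  fixes \<rho> :: "real \<Rightarrow> 'a::euclidean_space \<Rightarrow> real" and u :: "nat \<Rightarrow> 'a \<Rightarrow> real"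
  assumes p: "0 < p"
    and \<rho>: "\<And>k. \<rho> (t k) \<in> borel_measurable lebesgue" and t: "\<And>k. 0 < t k" "t \<longlonglongrightarrow> 0"
    and u: "\<And>k. u k \<in> borel_measurable lebesgue"
    and u_bound: "\<And>k. (\<integral>\<^sup>+x. ennreal (\<bar>u k x\<bar> powr p) \<partial>lebesgue) \<le> ennreal M"
    and F: "\<And>k. F_tp \<rho> (t k) p (u k) \<le> ennreal C"
    and w: "w \<in> borel_measurable lebesgue"
    and conv: "\<And>E. compact E \<Longrightarrow> (\<lambda>k. Lp_dist_on p E (u k) w) \<longlonglongrightarrow> 0"
  shows "in_W_kernel (\<lambda>z. Liminf (at_right 0) (\<lambda>s. ennreal (\<rho> s z / norm z powr p))) p w"
proof -
  obtain s where s: "strict_mono s" and lim: "AE x in lebesgue. (\<lambda>j. u (s j) x) \<longlonglongrightarrow> w x"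
    using Lp_loc_convergence_imp_AE_convergent_subseq[OF p u w conv] by blast
  have "(\<lambda>j. t (s j)) \<longlonglongrightarrow> 0"
    using LIMSEQ_subseq_LIMSEQ[OF t(2) s] by (simp add: o_def)
  then have "(\<integral>\<^sup>+x. \<integral>\<^sup>+y. ennreal (\<bar>w x - w y\<bar> powr p) *
      Liminf (at_right 0) (\<lambda>s. ennreal (\<rho> s (x - y) / norm (x - y) powr p)) \<partial>lebesgue \<partial>lebesgue) \<le> ennreal C"
    by (rule kernel_energy_le_of_AE_limit[where f = "\<lambda>j. u (s j)", OF p u lim _ t(1) \<rho> F])
  moreover have "in_Lp p w"
    by (rule in_Lp_of_AE_limit[where f = "\<lambda>j. u (s j)", OF p u w lim u_bound])
  ultimately show ?thesis
    unfolding in_W_kernel_def by (simp add: le_less_trans[OF _ ennreal_less_top])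
qed

theorem theorem1p5:
  fixes p :: real
    and \<rho> :: "real \<Rightarrow> 'a::euclidean_space \<Rightarrow> real"
    and t :: "nat \<Rightarrow> real"
    and u :: "nat \<Rightarrow> 'a \<Rightarrow> real"
  assumes p: "1 \<le> p"
    and rho_nonneg: "\<And>s z. s \<in> {0<..<1} \<Longrightarrow> 0 \<le> \<rho> s z"
    and rho_loc: "\<And>s. s \<in> {0<..<1} \<Longrightarrow> in_Lp_loc 1 (\<rho> s)"
    and rho_lower: "\<And>\<epsilon>. \<epsilon> > 0 \<Longrightarrow> \<exists>\<delta>\<in>{0<..1}. \<forall>s\<in>{0<..<\<delta>}.
            AE z in lebesgue. z \<in> ball 0 \<delta> \<longrightarrow>
              \<rho> s z / norm z powr p \<ge> 1 / (\<epsilon> * \<delta> ^ DIM('a))"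
    and t_in: "\<And>k. t k \<in> {0<..<1}"
    and t_lim: "t \<longlonglongrightarrow> 0"
    and u_Lp: "\<And>k. in_Lp p (u k)"
    and bdd: "\<exists>C::real. \<forall>k. ennreal (Lp_norm p (u k)) + F_tp \<rho> (t k) p (u k) \<le> ennreal C"
  shows "loc_precompact_seq p u \<and>
    (\<forall>(r::nat\<Rightarrow>nat) w. strict_mono r \<and> in_Lp_loc p w \<and>
        (\<forall>E. compact E \<longrightarrow> (\<lambda>j. Lp_dist_on p E (u (r j)) w) \<longlonglongrightarrow> 0) \<longrightarrow>
      in_W_kernel (\<lambda>z. Liminf (at_right 0) (\<lambda>s. ennreal (\<rho> s z / norm z powr p))) p w)"
proof -
  obtain C where C: "\<And>k. ennreal (Lp_norm p (u k)) + F_tp \<rho> (t k) p (u k) \<le> ennreal C"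
    using bdd by blast
  have F: "F_tp \<rho> (t k) p (u k) \<le> ennreal C" for k
    using C[of k] by (rule order_trans[rotated]) simp
  have u_bound: "(\<integral>\<^sup>+x. ennreal (\<bar>u k x\<bar> powr p) \<partial>lebesgue) \<le> ennreal (max C 0 powr p)" for k
    using C[of k] p by (intro nn_integral_abs_powr_le_of_Lp_norm_le[OF u_Lp]) (auto intro: order_trans[rotated])
  have \<rho>: "\<rho> (t k) \<in> borel_measurable lebesgue" for k
    using rho_loc[OF t_in] unfolding in_Lp_loc_def by blast
  have t: "0 < t k" for k
    using t_in[of k] by simp
  have u_meas: "u k \<in> borel_measurable lebesgue" for k
    using u_Lp unfolding in_Lp_def by blast
  show ?thesis
  proof (intro conjI allI impI; (elim conjE)?)
    show "loc_precompact_seq p u"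
      by (rule loc_precompact_seq_of_F_tp_bounded[OF p rho_lower \<rho> t t_lim u_Lp u_bound powr_ge_zero F])
    fix r :: "nat \<Rightarrow> nat" and w assume r: "strict_mono r" and "in_Lp_loc p w"
      and "\<forall>E. compact E \<longrightarrow> (\<lambda>j. Lp_dist_on p E (u (r j)) w) \<longlonglongrightarrow> 0"
    moreover have "(\<lambda>j. t (r j)) \<longlonglongrightarrow> 0"
      using LIMSEQ_subseq_LIMSEQ[OF t_lim r] by (simp add: o_def)
    ultimately show "in_W_kernel (\<lambda>z. Liminf (at_right 0) (\<lambda>s. ennreal (\<rho> s z / norm z powr p))) p w"
      using p by (intro in_W_kernel_of_Lp_loc_limit[where u = "\<lambda>j. u (r j)", OF _ \<rho> t _ u_meas u_bound F])
        (auto simp: in_Lp_loc_def)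
  qed
qed

end
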